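(* Let $H$ be an $n$-Hilbert space, fix $a_2,\dots,a_n\in H$, let $C\in\mathcal{GB}(H_F)$, and let $\{f_i\}_{i=1}^\infty$ be a $C$-controlled frame associated to $(a_2,\dots,a_n)$ for $H$ with $C$-controlled frame operator $S_C$. Suppose $S_C^{-1}$ commutes with $C$. Then $\{S_C^{-1/2}f_i\}_{i=1}^\infty$ is a $C$-controlled Parseval frame associated to $(a_2,\dots,a_n)$ for $H$.
   Context: Let $n\ge 2$ and let $H$ be a complex $n$-Hilbert space with $n$-inner product $\langle\cdot,\cdot\,|\,\cdot,\dots,\cdot\rangle$ and induced $n$-norm $\|x_1,\dots,x_n\|=\langle x_1,x_1|x_2,\dots,x_n\rangle^{1/2}$. Fix $a_2,\dots,a_n\in H$, put $F=\{a_2,\dots,a_n\}$ and let $L_F$ be its linear span. Then $\langle x,y\rangle_F:=\langle x,y|a_2,\dots,a_n\rangle$ is a semi-inner product on $H$ inducing an inner product on $H/L_F$; identifying $H/L_F$ with an algebraic complement $M_F$ of $L_F$ in $H$, $H_F$ denotes the Hilbert space completion of $M_F$; its inner product and norm are written $\langle f,g|a_2,\dots,a_n\rangle$ and $\|f,a_2,\dots,a_n\|$. $\mathcal{GB}(H_F)$ is the set of bounded linear operators on $H_F$ with bounded inverse. For $C\in\mathcal{GB}(H_F)$, $\{f_i\}$ in $H$ is a $C$-controlled frame associated to $(a_2,\dots,a_n)$ for $H$ if there are $0<A\le B<\infty$ with $A\|f,a_2,\dots,a_n\|^2\le\sum_i\langle f,f_i|a_2,\dots,a_n\rangle\langle Cf_i,f|a_2,\dots,a_n\rangle\le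 B\|f,a_2,\dots,a_n\|^2$ for all $f\in H_F$; it is a $C$-controlled Parseval frame if this holds with $A=B=1$. Its $C$-controlled frame operator is $S_C:H_F\to H_F$, $S_Cf=\sum_i\langle f,f_i|a_2,\dots,a_n\rangle Cf_i$; it satisfies $A\,I\le S_C\le B\,I$, is positive and invertible, and $S_C^{-1/2}$ denotes the positive square root of $S_C^{-1}$. *)

theory Defs
  imports Complex_Main "HOL-Library.Multiset"
begin

text \<open>The n-inner product is modelled as ip x y zs = <x,y|z2,...,zn>, with zs a list of
 length n-1.  The complex vector space structure on H is given by the scaling sa.\<close>

definition lin_dep_list :: "(complex \<Rightarrow> 'a \<Rightarrow> 'a::ab_group_add) \<Rightarrow> 'a list \<Rightarrow> bool" where
  "lin_dep_list sc vs \<longleftrightarrow>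
     (\<exists>c::nat \<Rightarrow> complex. (\<exists>k<length vs. c k \<noteq> 0) \<and> (\<Sum>k<length vs. sc (c k) (vs ! k)) = 0)"

definition n_inner_product ::
  "(complex \<Rightarrow> 'a \<Rightarrow> 'a::ab_group_add) \<Rightarrow> nat \<Rightarrow> ('a \<Rightarrow> 'a \<Rightarrow> 'a list \<Rightarrow> complex) \<Rightarrow> bool" where
  "n_inner_product sc n ip \<longleftrightarrow>
     vector_space sc \<and>
     (\<forall>x zs. length zs = n - 1 \<longrightarrow> Im (ip x x zs) = 0 \<and> Re (ip x x zs) \<ge> 0) \<and>
     (\<forall>x zs. length zs = n - 1 \<longrightarrow> (ip x x zs = 0 \<longleftrightarrow> lin_dep_list sc (x # zs))) \<and>
     (\<forall>x y zs zs'. length zs = n - 1 \<longrightarrow> mset zs' = mset zs \<longrightarrow> ip x y zs' = ip x y zs) \<and>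
     (\<forall>x z zs. length zs = n - 2 \<longrightarrow> ip x x (z # zs) = ip z z (x # zs)) \<and>
     (\<forall>x y zs. length zs = n - 1 \<longrightarrow> ip x y zs = cnj (ip y x zs)) \<and>
     (\<forall>\<alpha> x y zs. length zs = n - 1 \<longrightarrow> ip (sc \<alpha> x) y zs = \<alpha> * ip x y zs) \<and>
     (\<forall>x x' y zs. length zs = n - 1 \<longrightarrow> ip (x + x') y zs = ip x y zs + ip x' y zs)"

definition n_norm :: "('a \<Rightarrow> 'a \<Rightarrow> 'a list \<Rightarrow> complex) \<Rightarrow> 'a \<Rightarrow> 'a list \<Rightarrow> real" where
  "n_norm ip x zs = sqrt (Re (ip x x zs))"

definition n_hilbert_space ::
  "(complex \<Rightarrow> 'a \<Rightarrow> 'a::ab_group_add) \<Rightarrow> nat \<Rightarrow> ('a \<Rightarrow> 'a \<Rightarrow> 'a list \<Rightarrow> complex) \<Rightarrow> bool" where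
  "n_hilbert_space sc n ip \<longleftrightarrow>
     n \<ge> 2 \<and> n_inner_product sc n ip \<and>
     (\<forall>x::nat \<Rightarrow> 'a.
        (\<forall>zs. length zs = n - 1 \<longrightarrow>
           (\<forall>e>0. \<exists>N. \<forall>k\<ge>N. \<forall>m\<ge>N. n_norm ip (x k - x m) zs < e))
        \<longrightarrow> (\<exists>L. \<forall>zs. length zs = n - 1 \<longrightarrow> (\<lambda>k. n_norm ip (x k - L) zs) \<longlonglongrightarrow> 0))"

definition hnorm :: "('b \<Rightarrow> 'b \<Rightarrow> complex) \<Rightarrow> 'b \<Rightarrow> real" where
  "hnorm ipF x = sqrt (Re (ipF x x))"

definition hconv :: "('b \<Rightarrow> 'b \<Rightarrow> complex) \<Rightarrow> (nat \<Rightarrow> 'b::ab_group_add) \<Rightarrow> 'b \<Rightarrow> bool" where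
  "hconv ipF s L \<longleftrightarrow> (\<lambda>k. hnorm ipF (s k - L)) \<longlonglongrightarrow> 0"

definition hilbert_space :: "(complex \<Rightarrow> 'b \<Rightarrow> 'b::ab_group_add) \<Rightarrow> ('b \<Rightarrow> 'b \<Rightarrow> complex) \<Rightarrow> bool" where
  "hilbert_space sc ipF \<longleftrightarrow>
     vector_space sc \<and>
     (\<forall>x y. ipF x y = cnj (ipF y x)) \<and>
     (\<forall>\<alpha> x y. ipF (sc \<alpha> x) y = \<alpha> * ipF x y) \<and>
     (\<forall>x x' y. ipF (x + x') y = ipF x y + ipF x' y) \<and>
     (\<forall>x. Im (ipF x x) = 0 \<and> Re (ipF x x) \<ge> 0) \<and>
     (\<forall>x. ipF x x = 0 \<longrightarrow> x = 0) \<and>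
     (\<forall>s::nat \<Rightarrow> 'b. (\<forall>e>0. \<exists>N. \<forall>k\<ge>N. \<forall>m\<ge>N. hnorm ipF (s k - s m) < e)
          \<longrightarrow> (\<exists>L. hconv ipF s L))"

text \<open>H_F: a Hilbert space (sb, ipF) together with the canonical map j : H \<rightarrow> H_F
 (H \<rightarrow> H/L_F \<cong> M_F \<subseteq> H_F), which is linear, carries <.,.|a2,...,an> to the inner
 product of H_F, and has dense range.  This characterises the completion H_F up to
 unitary isomorphism.\<close>
definition HF_completion ::
  "(complex \<Rightarrow> 'a \<Rightarrow> 'a::ab_group_add) \<Rightarrow> ('a \<Rightarrow> 'a \<Rightarrow> 'a list \<Rightarrow> complex) \<Rightarrow> 'a list \<Rightarrow>
   (complex \<Rightarrow> 'b \<Rightarrow> 'b::ab_group_add) \<Rightarrow> ('b \<Rightarrow> 'b \<Rightarrow> complex) \<Rightarrow> ('a \<Rightarrow> 'b) \<Rightarrow> bool" where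
  "HF_completion sa ip as sb ipF j \<longleftrightarrow>
     hilbert_space sb ipF \<and>
     Vector_Spaces.linear sa sb j \<and>
     (\<forall>x y. ipF (j x) (j y) = ip x y as) \<and>
     (\<forall>g. \<forall>e>0. \<exists>x. hnorm ipF (g - j x) < e)"

definition bounded_op :: "(complex \<Rightarrow> 'b \<Rightarrow> 'b::ab_group_add) \<Rightarrow> ('b \<Rightarrow> 'b \<Rightarrow> complex) \<Rightarrow> ('b \<Rightarrow> 'b) \<Rightarrow> bool" where
  "bounded_op sb ipF T \<longleftrightarrow> Vector_Spaces.linear sb sb T \<and> (\<exists>K. \<forall>x. hnorm ipF (T x) \<le> K * hnorm ipF x)"

definition GB :: "(complex \<Rightarrow> 'b \<Rightarrow> 'b::ab_group_add) \<Rightarrow> ('b \<Rightarrow> 'b \<Rightarrow> complex) \<Rightarrow> ('b \<Rightarrow> 'b) set" where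
  "GB sb ipF = {T. bounded_op sb ipF T \<and> bij T \<and> bounded_op sb ipF (inv T)}"

definition positive_op :: "('b \<Rightarrow> 'b \<Rightarrow> complex) \<Rightarrow> ('b \<Rightarrow> 'b) \<Rightarrow> bool" where
  "positive_op ipF T \<longleftrightarrow> (\<forall>x. Im (ipF (T x) x) = 0 \<and> Re (ipF (T x) x) \<ge> 0)"

definition pos_sqrt :: "(complex \<Rightarrow> 'b \<Rightarrow> 'b::ab_group_add) \<Rightarrow> ('b \<Rightarrow> 'b \<Rightarrow> complex) \<Rightarrow> ('b \<Rightarrow> 'b) \<Rightarrow> ('b \<Rightarrow> 'b)" where
  "pos_sqrt sb ipF T = (THE R. bounded_op sb ipF R \<and> positive_op ipF R \<and> R \<circ> R = T)"

definition ctrl_frame_bounds :: "('b \<Rightarrow> 'b \<Rightarrow> complex) \<Rightarrow> ('b \<Rightarrow> 'b) \<Rightarrow> (nat \<Rightarrow> 'b) \<Rightarrow> real \<Rightarrow> real \<Rightarrow> bool" where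
  "ctrl_frame_bounds ipF C h A B \<longleftrightarrow>
     (\<forall>g. \<exists>s. (\<lambda>i. ipF g (h i) * ipF (C (h i)) g) sums s \<and> Im s = 0 \<and>
            A * (hnorm ipF g)\<^sup>2 \<le> Re s \<and> Re s \<le> B * (hnorm ipF g)\<^sup>2)"

definition ctrl_frame :: "('b \<Rightarrow> 'b \<Rightarrow> complex) \<Rightarrow> ('b \<Rightarrow> 'b) \<Rightarrow> (nat \<Rightarrow> 'b) \<Rightarrow> bool" where
  "ctrl_frame ipF C h \<longleftrightarrow> (\<exists>A B. 0 < A \<and> A \<le> B \<and> ctrl_frame_bounds ipF C h A B)"

definition ctrl_parseval_frame :: "('b \<Rightarrow> 'b \<Rightarrow> complex) \<Rightarrow> ('b \<Rightarrow> 'b) \<Rightarrow> (nat \<Rightarrow> 'b) \<Rightarrow> bool" where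
  "ctrl_parseval_frame ipF C h \<longleftrightarrow> ctrl_frame_bounds ipF C h 1 1"

definition ctrl_frame_op ::
  "(complex \<Rightarrow> 'b \<Rightarrow> 'b::ab_group_add) \<Rightarrow> ('b \<Rightarrow> 'b \<Rightarrow> complex) \<Rightarrow> ('b \<Rightarrow> 'b) \<Rightarrow> (nat \<Rightarrow> 'b) \<Rightarrow> 'b \<Rightarrow> 'b" where
  "ctrl_frame_op sb ipF C h g = (THE L. hconv ipF (\<lambda>N. \<Sum>i<N. sb (ipF g (h i)) (C (h i))) L)"

end

theory Submission
  imports Defs "HOL-Computational_Algebra.Polynomial"
begin

(* The C-controlled frame operator S is a positive operator with A <= S <= B.  Such an operator
   is invertible (Lax-Milgram: Riesz representation in the inner product <S x, y>), and S^-1 is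
   again bounded and positive.  A bounded positive T with ||T|| <= K has the positive square root
   sqrt K (I - Y), where Y is the limit of the increasing operator sequence Y_0 = 0,
   Y_(k+1) = (I - T/K + Y_k^2) / 2; as a limit of polynomials in T it commutes with every bounded
   operator commuting with T.  For R = (S^-1)^(1/2) this applies to C and to S, so
     sum_i <g, R f_i> <C R f_i, g> = sum_i <R g, f_i> <C f_i, R g> = <S R g, R g> = <R S R g, g>
                                  = <g, g>.
   The series defining S converges because {f_i} is a Bessel sequence, which follows from the
   upper frame bound by polarization and the boundedness of C^-1. *)

section \<open>Inner product geometry\<close>

lemma quadratic_nonneg_imp_discriminant:
  fixes a b c :: real
  assumes "\<And>s. 0 \<le> a - 2 * s * c + s\<^sup>2 * c * b" "0 \<le> c" "0 \<le> b"
  shows "c \<le> a * b"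
proof (cases "c = 0")
  case True
  then show ?thesis using assms(1)[of 0] \<open>0 \<le> b\<close> by simp
next
  case False
  with assms have c: "c > 0" by simp
  show ?thesis
  proof (cases "b = 0")
    case True
    have "0 \<le> a - 2 * ((a + 1) / (2 * c)) * c" using assms(1)[of "(a + 1) / (2 * c)"] True by simp
    also have "\<dots> = -1" using c by (simp add: field_simps)
    finally show ?thesis by simp
  next
    case False
    with assms have b: "b > 0" by simp
    have "0 \<le> a - 2 * (1 / b) * c + (1 / b)\<^sup>2 * c * b" using assms(1) by blast
    also have "\<dots> = a - c / b" using b by (simp add: field_simps power2_eq_square)
    finally show ?thesis using b by (simp add: field_simps)
  qed
qed

lemma LIMSEQ_0_by_bound:
  assumes "f \<longlonglongrightarrow> (0::real)" "\<And>k. norm (g k) \<le> f k"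
  shows "g \<longlonglongrightarrow> 0"
proof (rule tendsto_0_le[where K = 1, OF assms(1)])
  have "norm (g k) \<le> norm (f k) * 1" for k
    using assms(2)[of k] abs_ge_self[of "f k"] by simp
  then show "\<forall>\<^sub>F k in sequentially. norm (g k) \<le> norm (f k) * 1"
    by (simp add: always_eventually)
qed

locale hilbert =
  fixes sb :: "complex \<Rightarrow> 'a::ab_group_add \<Rightarrow> 'a" and ipF :: "'a \<Rightarrow> 'a \<Rightarrow> complex"
  assumes is_hilbert: "hilbert_space sb ipF"
begin

sublocale V: vector_space sb
  using is_hilbert unfolding hilbert_space_def by blast

sublocale VP: vector_space_pair sb sb ..

lemma ip_conj_sym: "ipF x y = cnj (ipF y x)"
  using is_hilbert unfolding hilbert_space_def by blast

lemma ip_scale_left [simp]: "ipF (sb a x) y = a * ipF x y"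
  using is_hilbert unfolding hilbert_space_def by blast

lemma ip_add_left [simp]: "ipF (x + x') y = ipF x y + ipF x' y"
  using is_hilbert unfolding hilbert_space_def by blast

lemma ip_self_Im [simp]: "Im (ipF x x) = 0"
  using is_hilbert unfolding hilbert_space_def by blast

lemma ip_self_Re_nonneg: "0 \<le> Re (ipF x x)"
  using is_hilbert unfolding hilbert_space_def by blast

lemma ip_self_eq_0: "ipF x x = 0 \<Longrightarrow> x = 0"
  using is_hilbert unfolding hilbert_space_def by blast

lemma hconv_Cauchy:
  "\<forall>e>0. \<exists>N. \<forall>k\<ge>N. \<forall>m\<ge>N. hnorm ipF (s k - s m) < e \<Longrightarrow> \<exists>L. hconv ipF s L"
  using is_hilbert unfolding hilbert_space_def by blast

lemma ip_add_right [simp]: "ipF x (y + y') = ipF x y + ipF x y'"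
  by (subst ip_conj_sym) (simp add: ip_conj_sym[of y x] ip_conj_sym[of y' x])

lemma ip_scale_right [simp]: "ipF x (sb a y) = cnj a * ipF x y"
  by (subst ip_conj_sym) (simp add: ip_conj_sym[of y x])

lemma ip_zero_left [simp]: "ipF 0 y = 0"
  using ip_add_left[of 0 0 y] by simp

lemma ip_zero_right [simp]: "ipF x 0 = 0"
  using ip_add_right[of x 0 0] by simp

lemma ip_minus_left [simp]: "ipF (- x) y = - ipF x y"
  using ip_add_left[of x "- x" y] by (simp add: eq_neg_iff_add_eq_0 add.commute)

lemma ip_minus_right [simp]: "ipF x (- y) = - ipF x y"
  using ip_add_right[of x y "- y"] by (simp add: eq_neg_iff_add_eq_0 add.commute)

lemma ip_diff_left [simp]: "ipF (x - x') y = ipF x y - ipF x' y"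
  using ip_add_left[of x "- x'" y] by simp

lemma ip_diff_right [simp]: "ipF x (y - y') = ipF x y - ipF x y'"
  using ip_add_right[of x y "- y'"] by simp

lemma ip_sum_left: "ipF (\<Sum>i\<in>I. f i) y = (\<Sum>i\<in>I. ipF (f i) y)"
  by (induct I rule: infinite_finite_induct) auto

lemma ip_mult_swap: "ipF x y * ipF y x = complex_of_real ((cmod (ipF x y))\<^sup>2)"
  using complex_norm_square[of "ipF x y"] ip_conj_sym[of y x] by simp

abbreviation nm :: "'a \<Rightarrow> real" where "nm x \<equiv> hnorm ipF x"

lemma nm_nonneg [simp]: "0 \<le> nm x"
  by (simp add: hnorm_def ip_self_Re_nonneg)

lemma nm_power2: "(nm x)\<^sup>2 = Re (ipF x x)"
  using ip_self_Re_nonneg[of x] by (simp add: hnorm_def)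

lemma ip_self: "ipF x x = complex_of_real ((nm x)\<^sup>2)"
  using nm_power2[of x] ip_self_Im[of x] by (simp add: complex_eq_iff)

lemma cmod_ip_self: "cmod (ipF x x) = (nm x)\<^sup>2"
  using ip_self[of x] by (metis abs_of_nonneg norm_of_real zero_le_power2)

lemma nm_zero [simp]: "nm 0 = 0"
  by (simp add: hnorm_def)

lemma nm_eq_0_iff: "nm x = 0 \<longleftrightarrow> x = 0"
  using ip_self[of x] ip_self_eq_0[of x] by auto

lemma nm_minus [simp]: "nm (- x) = nm x"
  by (simp add: hnorm_def)

lemma nm_add_power2: "(nm (x + y))\<^sup>2 = (nm x)\<^sup>2 + 2 * Re (ipF x y) + (nm y)\<^sup>2"
proof -
  have "Re (ipF y x) = Re (ipF x y)" by (subst ip_conj_sym) simp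
  then show ?thesis by (simp add: nm_power2)
qed

lemma nm_diff_power2: "(nm (x - y))\<^sup>2 = (nm x)\<^sup>2 - 2 * Re (ipF x y) + (nm y)\<^sup>2"
  using nm_add_power2[of x "- y"] by simp

lemma parallelogram: "(nm (x + y))\<^sup>2 + (nm (x - y))\<^sup>2 = 2 * (nm x)\<^sup>2 + 2 * (nm y)\<^sup>2"
  using nm_add_power2[of x y] nm_diff_power2[of x y] by linarith

lemma nm_scale [simp]: "nm (sb a x) = cmod a * nm x"
proof -
  have "cnj a * a = complex_of_real ((cmod a)\<^sup>2)" by (metis complex_norm_square mult.commute)
  then have "ipF (sb a x) (sb a x) = complex_of_real ((cmod a)\<^sup>2) * ipF x x"
    by (simp add: mult.assoc[symmetric])
  then have "Re (ipF (sb a x) (sb a x)) = Re (complex_of_real ((cmod a)\<^sup>2) * ipF x x)"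
    by (simp only:)
  also have "\<dots> = (cmod a)\<^sup>2 * Re (ipF x x)"
    by simp
  finally have "Re (ipF (sb a x) (sb a x)) = (cmod a)\<^sup>2 * Re (ipF x x)" .
  then have "(nm (sb a x))\<^sup>2 = (cmod a * nm x)\<^sup>2"
    by (simp add: nm_power2 power_mult_distrib)
  then show ?thesis by (simp add: power2_eq_iff_nonneg)
qed

lemma nm_diff_commute: "nm (x - y) = nm (y - x)"
  using nm_minus[of "x - y"] by simp

abbreviation lin :: "('a \<Rightarrow> 'a) \<Rightarrow> bool" where "lin T \<equiv> Vector_Spaces.linear sb sb T"

lemma linearI: "(\<And>x y. T (x + y) = T x + T y) \<Longrightarrow> (\<And>a x. T (sb a x) = sb a (T x)) \<Longrightarrow> lin T"
  using V.vector_space_axioms by (simp add: Vector_Spaces.linear_iff)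

lemma positive_op_conj_sym:
  assumes "lin T" "\<And>x. Im (ipF (T x) x) = 0"
  shows "ipF (T x) y = cnj (ipF (T y) x)"
proof -
  have sum: "ipF (T (x + y)) (x + y) = ipF (T x) x + ipF (T x) y + ipF (T y) x + ipF (T y) y"
    by (simp add: VP.linear_add[OF assms(1)])
  have sum_i: "ipF (T (x + sb \<i> y)) (x + sb \<i> y)
      = ipF (T x) x - \<i> * ipF (T x) y + \<i> * ipF (T y) x + ipF (T y) y"
    by (simp add: VP.linear_add[OF assms(1)] VP.linear_scale[OF assms(1)] algebra_simps)
  have "Im (ipF (T x) y) + Im (ipF (T y) x) = 0"
    using assms(2)[of "x + y"] assms(2)[of x] assms(2)[of y] unfolding sum by simp
  moreover have "Re (ipF (T x) y) - Re (ipF (T y) x) = 0"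
    using assms(2)[of "x + sb \<i> y"] assms(2)[of x] assms(2)[of y] unfolding sum_i by simp
  ultimately show ?thesis by (simp add: complex_eq_iff)
qed

lemma positive_op_selfadjoint:
  assumes "lin T" "positive_op ipF T"
  shows "ipF (T x) y = ipF x (T y)"
  using positive_op_conj_sym[OF assms(1), of x y] assms(2)
  by (simp add: positive_op_def ip_conj_sym[of x])

lemma positive_op_cauchy_schwarz:
  assumes "lin T" "positive_op ipF T"
  shows "(cmod (ipF (T x) y))\<^sup>2 \<le> Re (ipF (T x) x) * Re (ipF (T y) y)"
proof (rule quadratic_nonneg_imp_discriminant)
  have Im: "\<And>x. Im (ipF (T x) x) = 0" and Re: "\<And>x. 0 \<le> Re (ipF (T x) x)"
    using assms(2) by (auto simp: positive_op_def)
  show "0 \<le> Re (ipF (T y) y)" by (rule Re)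
  fix s :: real
  let ?t = "- complex_of_real s * ipF (T x) y"
  have "0 \<le> Re (ipF (T (x + sb ?t y)) (x + sb ?t y))" by (rule Re)
  also have "ipF (T (x + sb ?t y)) (x + sb ?t y)
      = ipF (T x) x + cnj ?t * ipF (T x) y + ?t * ipF (T y) x + ?t * cnj ?t * ipF (T y) y"
    by (simp add: VP.linear_add[OF assms(1)] VP.linear_diff[OF assms(1)] VP.linear_scale[OF assms(1)]
        algebra_simps)
  also have "Re \<dots> = Re (ipF (T x) x) - 2 * s * (cmod (ipF (T x) y))\<^sup>2
      + s\<^sup>2 * (cmod (ipF (T x) y))\<^sup>2 * Re (ipF (T y) y)"
    using Im[of y] cmod_power2[of "ipF (T x) y"]
    by (subst positive_op_conj_sym[OF assms(1) Im, of y x]) (simp add: power2_eq_square algebra_simps)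
  finally show "0 \<le> Re (ipF (T x) x) - 2 * s * (cmod (ipF (T x) y))\<^sup>2
      + s\<^sup>2 * (cmod (ipF (T x) y))\<^sup>2 * Re (ipF (T y) y)" .
qed simp

lemma ip_cauchy_schwarz: "cmod (ipF x y) \<le> nm x * nm y"
proof -
  have "positive_op ipF (\<lambda>x. x)" by (simp add: positive_op_def ip_self_Re_nonneg)
  then have "(cmod (ipF x y))\<^sup>2 \<le> (nm x * nm y)\<^sup>2"
    using positive_op_cauchy_schwarz[OF V.linear_ident, of x y]
    by (simp add: nm_power2 power_mult_distrib)
  then show ?thesis by (rule power2_le_imp_le) simp
qed

lemma nm_triangle: "nm (x + y) \<le> nm x + nm y"
proof -
  have "Re (ipF x y) \<le> nm x * nm y"
    using ip_cauchy_schwarz[of x y] complex_Re_le_cmod[of "ipF x y"] by linarith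
  then have "(nm (x + y))\<^sup>2 \<le> (nm x + nm y)\<^sup>2"
    using nm_add_power2[of x y] by (simp add: power2_eq_square algebra_simps)
  then show ?thesis by (rule power2_le_imp_le) simp
qed

lemma nm_diff_le: "nm (x - y) \<le> nm x + nm y"
  using nm_triangle[of x "- y"] by simp

lemma nm_diff_triangle: "nm (x - z) \<le> nm (x - y) + nm (y - z)"
  using nm_triangle[of "x - y" "y - z"] by simp

lemma nm_reverse_triangle: "\<bar>nm x - nm y\<bar> \<le> nm (x - y)"
  using nm_triangle[of "x - y" y] nm_triangle[of "y - x" x] nm_diff_commute[of x y] by auto

lemma ip_Re_le_of_bound: "nm (T x) \<le> K * nm x \<Longrightarrow> Re (ipF (T x) x) \<le> K * (nm x)\<^sup>2"
  using complex_Re_le_cmod[of "ipF (T x) x"] ip_cauchy_schwarz[of "T x" x]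
    mult_right_mono[of "nm (T x)" "K * nm x" "nm x"]
  by (simp add: power2_eq_square mult.assoc)

lemma positive_op_norm_power2_le:
  assumes "lin T" "positive_op ipF T" "0 \<le> L" "\<And>x. Re (ipF (T x) x) \<le> L * (nm x)\<^sup>2"
  shows "(nm (T x))\<^sup>2 \<le> L * Re (ipF (T x) x)"
proof (cases "nm (T x) = 0")
  case True
  then show ?thesis using assms(2,3) by (simp add: positive_op_def)
next
  case False
  have Re: "0 \<le> Re (ipF (T x) x)" using assms(2) by (simp add: positive_op_def)
  have "(cmod (ipF (T x) (T x)))\<^sup>2 \<le> Re (ipF (T x) x) * Re (ipF (T (T x)) (T x))"
    by (rule positive_op_cauchy_schwarz[OF assms(1,2)])
  also have "\<dots> \<le> Re (ipF (T x) x) * (L * (nm (T x))\<^sup>2)"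
    by (rule mult_left_mono[OF assms(4) Re])
  finally have "((nm (T x))\<^sup>2)\<^sup>2 \<le> (L * Re (ipF (T x) x)) * (nm (T x))\<^sup>2"
    by (simp add: cmod_ip_self algebra_simps)
  then have "(nm (T x))\<^sup>2 * (nm (T x))\<^sup>2 \<le> (L * Re (ipF (T x) x)) * (nm (T x))\<^sup>2"
    unfolding power2_eq_square[of "(nm (T x))\<^sup>2"] .
  moreover have "0 < (nm (T x))\<^sup>2" using False by simp
  ultimately show ?thesis by (rule mult_right_le_imp_le)
qed

lemma positive_op_norm_le:
  assumes "lin T" "positive_op ipF T" "0 \<le> L" "\<And>x. Re (ipF (T x) x) \<le> L * (nm x)\<^sup>2"
  shows "nm (T x) \<le> L * nm x"
proof -
  have "(nm (T x))\<^sup>2 \<le> L * (L * (nm x)\<^sup>2)"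
    using positive_op_norm_power2_le[OF assms, of x] mult_left_mono[OF assms(4) assms(3), of x]
    by linarith
  then have "(nm (T x))\<^sup>2 \<le> (L * nm x)\<^sup>2" by (simp add: power2_eq_square algebra_simps)
  then show ?thesis by (rule power2_le_imp_le) (simp add: assms(3))
qed

lemma positive_op_Re_eq_0:
  assumes "lin T" "positive_op ipF T" "Re (ipF (T y) y) = 0"
  shows "T y = 0"
proof -
  have "(cmod (ipF (T y) (T y)))\<^sup>2 \<le> Re (ipF (T y) y) * Re (ipF (T (T y)) (T y))"
    by (rule positive_op_cauchy_schwarz[OF assms(1,2)])
  then have "ipF (T y) (T y) = 0" using assms(3) by simp
  then show ?thesis by (rule ip_self_eq_0)
qed

lemma hconv_unique: "hconv ipF s L \<Longrightarrow> hconv ipF s L' \<Longrightarrow> L = L'"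
proof -
  assume "hconv ipF s L" "hconv ipF s L'"
  then have "(\<lambda>k. nm (s k - L) + nm (s k - L')) \<longlonglongrightarrow> 0"
    using tendsto_add[of "\<lambda>k. nm (s k - L)" 0 sequentially "\<lambda>k. nm (s k - L')" 0]
    by (simp add: hconv_def)
  moreover have "nm (L - L') \<le> nm (s k - L) + nm (s k - L')" for k
    using nm_diff_triangle[of L L' "s k"] nm_diff_commute[of L "s k"] by simp
  ultimately have "nm (L - L') \<le> 0"
    by (intro LIMSEQ_le_const[of "\<lambda>k. nm (s k - L) + nm (s k - L')"]) auto
  then show "L = L'" using nm_eq_0_iff[of "L - L'"] nm_nonneg[of "L - L'"] by simp
qed

lemma hconv_the: "hconv ipF s L \<Longrightarrow> (THE L. hconv ipF s L) = L"
  using hconv_unique by blast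

lemma hconv_ip_left: "hconv ipF s L \<Longrightarrow> (\<lambda>k. ipF (s k) y) \<longlonglongrightarrow> ipF L y"
proof (rule LIM_zero_cancel, rule LIMSEQ_0_by_bound)
  assume "hconv ipF s L"
  then show "(\<lambda>k. nm (s k - L) * nm y) \<longlonglongrightarrow> 0"
    using tendsto_mult_left_zero[of "\<lambda>k. nm (s k - L)" sequentially "nm y"] by (simp add: hconv_def)
  show "norm (ipF (s k) y - ipF L y) \<le> nm (s k - L) * nm y" for k
    using ip_cauchy_schwarz[of "s k - L" y] by simp
qed

lemma hconv_nm: "hconv ipF s L \<Longrightarrow> (\<lambda>k. nm (s k)) \<longlonglongrightarrow> nm L"
proof (rule LIM_zero_cancel, rule LIMSEQ_0_by_bound)
  assume "hconv ipF s L"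
  then show "(\<lambda>k. nm (s k - L)) \<longlonglongrightarrow> 0" by (simp add: hconv_def)
  show "norm (nm (s k) - nm L) \<le> nm (s k - L)" for k
    using nm_reverse_triangle by simp
qed

lemma hconv_add: "hconv ipF s L \<Longrightarrow> hconv ipF t M \<Longrightarrow> hconv ipF (\<lambda>k. s k + t k) (L + M)"
  unfolding hconv_def
proof (rule LIMSEQ_0_by_bound)
  assume "(\<lambda>k. nm (s k - L)) \<longlonglongrightarrow> 0" "(\<lambda>k. nm (t k - M)) \<longlonglongrightarrow> 0"
  from tendsto_add[OF this] show "(\<lambda>k. nm (s k - L) + nm (t k - M)) \<longlonglongrightarrow> 0" by simp
  show "norm (nm (s k + t k - (L + M))) \<le> nm (s k - L) + nm (t k - M)" for k
    using nm_triangle[of "s k - L" "t k - M"] by (simp add: algebra_simps)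
qed

lemma hconv_linear:
  assumes "lin T" "\<And>x. nm (T x) \<le> K * nm x" "hconv ipF s L"
  shows "hconv ipF (\<lambda>k. T (s k)) (T L)"
  unfolding hconv_def
proof (rule LIMSEQ_0_by_bound)
  show "(\<lambda>k. \<bar>K\<bar> * nm (s k - L)) \<longlonglongrightarrow> 0"
    using assms(3) tendsto_mult_right_zero[of "\<lambda>k. nm (s k - L)" sequentially "\<bar>K\<bar>"]
    by (simp add: hconv_def)
  show "norm (nm (T (s k) - T L)) \<le> \<bar>K\<bar> * nm (s k - L)" for k
    using assms(2)[of "s k - L"] mult_right_mono[OF abs_ge_self[of K], of "nm (s k - L)"]
    by (simp add: VP.linear_diff[OF assms(1)])
qed

lemma hconv_scale: "hconv ipF s L \<Longrightarrow> hconv ipF (\<lambda>k. sb a (s k)) (sb a L)"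
  using hconv_linear[of "sb a" "cmod a"] VP.linear_compose_scale_right[OF V.linear_id]
  by (simp add: id_def)

lemma linear_hconv_limit:
  assumes "\<And>k. lin (F k)" "\<And>x. hconv ipF (\<lambda>k. F k x) (G x)"
  shows "lin G"
proof (rule linearI)
  fix x y
  have "hconv ipF (\<lambda>k. F k (x + y)) (G x + G y)"
    using hconv_add[OF assms(2)[of x] assms(2)[of y]] by (simp add: VP.linear_add[OF assms(1)])
  then show "G (x + y) = G x + G y" using assms(2) hconv_unique by blast
next
  fix a x
  have "hconv ipF (\<lambda>k. F k (sb a x)) (sb a (G x))"
    using hconv_scale[OF assms(2)[of x]] by (simp add: VP.linear_scale[OF assms(1)])
  then show "G (sb a x) = sb a (G x)" using assms(2) hconv_unique by blast
qed

end

section \<open>Orthogonal projection and the Riesz representation\<close>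

context hilbert
begin

definition closed_subspace :: "'a set \<Rightarrow> bool" where
  "closed_subspace W \<longleftrightarrow> 0 \<in> W \<and> (\<forall>u\<in>W. \<forall>v\<in>W. u + v \<in> W) \<and> (\<forall>a. \<forall>u\<in>W. sb a u \<in> W) \<and>
     (\<forall>s L. range s \<subseteq> W \<longrightarrow> hconv ipF s L \<longrightarrow> L \<in> W)"

lemma two_scale: "sb 2 x = x + x"
  using V.scale_left_distrib[of 1 1 x] by (simp add: one_add_one)

lemma apollonius:
  "4 * (nm (x - sb (1/2) (u + v)))\<^sup>2 + (nm (u - v))\<^sup>2 = 2 * (nm (x - u))\<^sup>2 + 2 * (nm (x - v))\<^sup>2"
proof -
  have "(x - u) + (x - v) = sb 2 (x - sb (1/2) (u + v))"
    by (simp add: V.scale_right_diff_distrib two_scale[of x])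
  then have "(nm ((x - u) + (x - v)))\<^sup>2 = 4 * (nm (x - sb (1/2) (u + v)))\<^sup>2"
    by (simp add: power_mult_distrib)
  then show ?thesis
    using parallelogram[of "x - u" "x - v"] nm_diff_commute[of v u] by simp
qed

lemma Cauchy_of_power2_bound:
  assumes "\<And>n m. (nm (w n - w m))\<^sup>2 \<le> c * inverse (real (Suc n)) + c * inverse (real (Suc m))"
  shows "\<forall>e>0. \<exists>N. \<forall>k\<ge>N. \<forall>m\<ge>N. nm (w k - w m) < e"
proof (intro allI impI)
  fix e :: real
  assume e: "0 < e"
  obtain N :: nat where N: "2 * \<bar>c\<bar> / e\<^sup>2 < real N"
    using reals_Archimedean2 by blast
  have c_le: "c * inverse (real (Suc n)) \<le> \<bar>c\<bar> * inverse (real (Suc N))" if "N \<le> n" for n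
  proof -
    have "c * inverse (real (Suc n)) \<le> \<bar>c\<bar> * inverse (real (Suc n))"
      by (rule mult_right_mono) simp_all
    also have "\<dots> \<le> \<bar>c\<bar> * inverse (real (Suc N))"
      using that by (intro mult_left_mono) (simp_all add: le_imp_inverse_le)
    finally show ?thesis .
  qed
  show "\<exists>N. \<forall>k\<ge>N. \<forall>m\<ge>N. nm (w k - w m) < e"
  proof (intro exI allI impI)
    fix k m
    assume "N \<le> k" "N \<le> m"
    then have "(nm (w k - w m))\<^sup>2 \<le> 2 * \<bar>c\<bar> * inverse (real (Suc N))"
      using assms[of k m] c_le[of k] c_le[of m] by linarith
    also have "\<dots> < e\<^sup>2"
      using N e by (simp add: field_simps) (use zero_less_power[OF e, of 2] in linarith)
    finally show "nm (w k - w m) < e" using e by (simp add: power_less_imp_less_base)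
  qed
qed

lemma closest_point_exists:
  assumes W: "closed_subspace W"
  obtains w0 where "w0 \<in> W" "\<And>w. w \<in> W \<Longrightarrow> nm (x - w0) \<le> nm (x - w)"
proof -
  define D where "D = Inf ((\<lambda>w. (nm (x - w))\<^sup>2) ` W)"
  have bdd: "bdd_below ((\<lambda>w. (nm (x - w))\<^sup>2) ` W)" by (rule bdd_belowI[of _ 0]) auto
  have D_le: "D \<le> (nm (x - w))\<^sup>2" if "w \<in> W" for w
    unfolding D_def using that by (intro cInf_lower[OF _ bdd]) auto
  have "\<exists>w\<in>W. (nm (x - w))\<^sup>2 < D + inverse (real (Suc n))" for n
    using W cInf_lessD[of "(\<lambda>w. (nm (x - w))\<^sup>2) ` W" "D + inverse (real (Suc n))"]
    by (auto simp: D_def closed_subspace_def)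
  then obtain w where w: "\<And>n. w n \<in> W" "\<And>n. (nm (x - w n))\<^sup>2 < D + inverse (real (Suc n))"
    by metis
  have "(nm (w n - w m))\<^sup>2 \<le> 2 * inverse (real (Suc n)) + 2 * inverse (real (Suc m))" for n m
  proof -
    have "sb (1/2) (w n + w m) \<in> W" using W w(1) by (simp add: closed_subspace_def)
    then show ?thesis
      using D_le apollonius[of x "w n" "w m"] w(2)[of n] w(2)[of m] by fastforce
  qed
  then obtain w0 where w0: "hconv ipF w w0"
    using hconv_Cauchy Cauchy_of_power2_bound by blast
  have "range w \<subseteq> W" using w(1) by auto
  then have "w0 \<in> W" using W w0 by (simp add: closed_subspace_def)
  moreover have "(nm (x - w0))\<^sup>2 \<le> D"
  proof (rule LIMSEQ_le)
    show "(\<lambda>n. (nm (x - w n))\<^sup>2) \<longlonglongrightarrow> (nm (x - w0))\<^sup>2"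
      using hconv_nm[of "\<lambda>n. x - w n" "x - w0"] w0
      by (intro tendsto_power) (simp add: hconv_def nm_diff_commute)
    show "(\<lambda>n. D + inverse (real (Suc n))) \<longlonglongrightarrow> D"
      using tendsto_add[OF tendsto_const LIMSEQ_inverse_real_of_nat, of D] by simp
  qed (use w(2) less_imp_le in blast)
  ultimately show ?thesis
    using that D_le by (meson order_trans power2_le_imp_le nm_nonneg)
qed

lemma closest_point_orthogonal:
  assumes W: "closed_subspace W" and "w0 \<in> W" "\<And>w. w \<in> W \<Longrightarrow> nm (x - w0) \<le> nm (x - w)"
    and "v \<in> W"
  shows "ipF (x - w0) v = 0"
proof -
  define z where "z = x - w0"
  define c where "c = ipF z v"
  define s where "s = 1 / ((nm v)\<^sup>2 + 1)"
  have "0 < (nm v)\<^sup>2 + 1" by (rule add_nonneg_pos) simp_all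
  then have s: "0 < s" "s * (nm v)\<^sup>2 < 1" by (simp_all add: s_def field_simps)
  let ?t = "complex_of_real s * c"
  have "w0 + sb ?t v \<in> W" using W assms(2,4) by (simp add: closed_subspace_def)
  then have "nm z \<le> nm (z - sb ?t v)" using assms(3) by (simp add: z_def algebra_simps)
  then have "(nm z)\<^sup>2 \<le> (nm (z - sb ?t v))\<^sup>2" by (simp add: power_mono)
  also have "(nm (z - sb ?t v))\<^sup>2 = (nm z)\<^sup>2 - 2 * s * (cmod c)\<^sup>2 + s\<^sup>2 * (cmod c)\<^sup>2 * (nm v)\<^sup>2"
  proof -
    have "Re (ipF z (sb ?t v)) = s * (cmod c)\<^sup>2"
      using cmod_power2[of c] by (simp add: c_def power2_eq_square algebra_simps)
    moreover have "cmod ?t = s * cmod c" using s by (simp add: norm_mult)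
    ultimately show ?thesis by (simp add: nm_diff_power2 power_mult_distrib)
  qed
  finally have "0 \<le> s * (cmod c)\<^sup>2 * (s * (nm v)\<^sup>2 - 2)" by (simp add: algebra_simps power2_eq_square)
  then have "s * (cmod c)\<^sup>2 = 0" using s by (smt (verit) mult_nonneg_nonneg mult_pos_neg zero_le_power2)
  then show ?thesis using s by (simp add: c_def z_def)
qed

lemma closed_subspace_kernel:
  assumes add: "\<And>u v. \<psi> (u + v) = \<psi> u + \<psi> v" and scale: "\<And>a u. \<psi> (sb a u) = a * \<psi> u"
    and bound: "\<And>u. cmod (\<psi> u) \<le> K * nm u"
  shows "closed_subspace {w. \<psi> w = 0}"
  unfolding closed_subspace_def
proof (intro conjI ballI allI impI)
  show "0 \<in> {w. \<psi> w = 0}" using add[of 0 0] by simp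
  fix s L
  assume s: "range s \<subseteq> {w. \<psi> w = 0}" and L: "hconv ipF s L"
  have "cmod (\<psi> L) \<le> K * nm (s n - L)" for n
  proof -
    have "s n \<in> {w. \<psi> w = 0}" using s by blast
    then have "\<psi> (s n - L) + \<psi> L = 0" using add[of "s n - L" L] by simp
    then have "cmod (\<psi> L) = cmod (\<psi> (s n - L))" by (metis add_eq_0_iff norm_minus_cancel)
    then show ?thesis using bound[of "s n - L"] by simp
  qed
  moreover have "(\<lambda>n. K * nm (s n - L)) \<longlonglongrightarrow> 0"
    using L tendsto_mult_right_zero[of "\<lambda>n. nm (s n - L)" sequentially K] by (simp add: hconv_def)
  ultimately have "cmod (\<psi> L) \<le> 0" by (intro LIMSEQ_le_const[of "\<lambda>n. K * nm (s n - L)"]) auto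
  then show "L \<in> {w. \<psi> w = 0}" by simp
qed (simp_all add: add scale)

lemma riesz_representation:
  assumes add: "\<And>u v. \<psi> (u + v) = \<psi> u + \<psi> v" and scale: "\<And>a u. \<psi> (sb a u) = a * \<psi> u"
    and bound: "\<And>u. cmod (\<psi> u) \<le> K * nm u" and "0 \<le> K"
  shows "\<exists>k. (\<forall>u. \<psi> u = ipF u k) \<and> nm k \<le> K"
proof (cases "\<forall>u. \<psi> u = 0")
  case True
  then show ?thesis using \<open>0 \<le> K\<close> by (intro exI[of _ 0]) simp
next
  case False
  then obtain x where x: "\<psi> x \<noteq> 0" by auto
  have diff: "\<psi> (u - v) = \<psi> u - \<psi> v" for u v using add[of "u - v" v] by (simp add: eq_diff_eq)
  define W where "W = {w. \<psi> w = 0}"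
  have W: "closed_subspace W" unfolding W_def by (rule closed_subspace_kernel[OF add scale bound])
  obtain w0 where w0: "w0 \<in> W" "\<And>w. w \<in> W \<Longrightarrow> nm (x - w0) \<le> nm (x - w)"
    using closest_point_exists[OF W] by blast
  define z where "z = x - w0"
  have orth: "ipF z v = 0" if "v \<in> W" for v
    unfolding z_def by (rule closest_point_orthogonal[OF W w0 that])
  have \<psi>z: "\<psi> z = \<psi> x" using w0(1) by (simp add: z_def W_def diff)
  then have "z \<noteq> 0" using x add[of 0 0] by auto
  then have nz: "0 < nm z" using nm_eq_0_iff[of z] nm_nonneg[of z] by linarith
  have "ipF u z = \<psi> u / \<psi> z * complex_of_real ((nm z)\<^sup>2)" for u
  proof -
    have "u - sb (\<psi> u / \<psi> z) z \<in> W" using \<psi>z x by (simp add: W_def diff scale)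
    then have "ipF z (u - sb (\<psi> u / \<psi> z) z) = 0" by (rule orth)
    then have "ipF (u - sb (\<psi> u / \<psi> z) z) z = 0" by (subst ip_conj_sym) simp
    then show ?thesis by (simp add: ip_self)
  qed
  then have "\<psi> u = ipF u (sb (cnj (\<psi> z) / complex_of_real ((nm z)\<^sup>2)) z)" for u
    using \<psi>z x nz by simp
  moreover have "nm (sb (cnj (\<psi> z) / complex_of_real ((nm z)\<^sup>2)) z) = cmod (\<psi> z) / nm z"
    using nz by (simp add: norm_divide norm_mult power2_eq_square)
  moreover have "cmod (\<psi> z) / nm z \<le> K" using bound[of z] nz by (simp add: divide_le_eq)
  ultimately show ?thesis by metis
qed

end

section \<open>Bessel sequences\<close>

context hilbert
begin

definition bessel_seq :: "(nat \<Rightarrow> 'a) \<Rightarrow> bool" where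
  "bessel_seq h \<longleftrightarrow> (\<exists>L. \<forall>g. summable (\<lambda>i. (cmod (ipF g (h i)))\<^sup>2) \<and>
     (\<Sum>i. (cmod (ipF g (h i)))\<^sup>2) \<le> L * (nm g)\<^sup>2)"

definition partial_frame_op :: "(nat \<Rightarrow> 'a) \<Rightarrow> nat set \<Rightarrow> 'a \<Rightarrow> 'a" where
  "partial_frame_op h I x = (\<Sum>i\<in>I. sb (ipF x (h i)) (h i))"

lemma linear_partial_frame_op: "lin (partial_frame_op h I)"
  by (rule linearI) (simp_all add: partial_frame_op_def V.scale_left_distrib sum.distrib V.scale_sum_right)

lemma partial_frame_op_ip:
  "ipF (partial_frame_op h I x) x = complex_of_real (\<Sum>i\<in>I. (cmod (ipF x (h i)))\<^sup>2)"
  unfolding partial_frame_op_def ip_sum_left of_real_sum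
  by (rule sum.cong[OF refl]) (simp add: ip_mult_swap)

lemma positive_partial_frame_op: "positive_op ipF (partial_frame_op h I)"
  by (simp add: positive_op_def partial_frame_op_ip sum_nonneg)

lemma partial_frame_op_norm_power2_le:
  assumes "0 \<le> L" "\<And>g. (\<Sum>i\<in>I. (cmod (ipF g (h i)))\<^sup>2) \<le> L * (nm g)\<^sup>2"
  shows "(nm (partial_frame_op h I x))\<^sup>2 \<le> L * (\<Sum>i\<in>I. (cmod (ipF x (h i)))\<^sup>2)"
  using positive_op_norm_power2_le[OF linear_partial_frame_op positive_partial_frame_op assms(1)] assms(2)
  by (simp add: partial_frame_op_ip)

lemma bessel_seqE:
  assumes "bessel_seq h"
  obtains L where "0 \<le> L" "\<And>g. summable (\<lambda>i. (cmod (ipF g (h i)))\<^sup>2)"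
    "\<And>I g. finite I \<Longrightarrow> (\<Sum>i\<in>I. (cmod (ipF g (h i)))\<^sup>2) \<le> L * (nm g)\<^sup>2"
proof -
  obtain L where L: "\<And>g. summable (\<lambda>i. (cmod (ipF g (h i)))\<^sup>2)"
      "\<And>g. (\<Sum>i. (cmod (ipF g (h i)))\<^sup>2) \<le> L * (nm g)\<^sup>2"
    using assms by (auto simp: bessel_seq_def)
  have "(\<Sum>i\<in>I. (cmod (ipF g (h i)))\<^sup>2) \<le> max L 0 * (nm g)\<^sup>2" if "finite I" for I g
  proof -
    have "(\<Sum>i\<in>I. (cmod (ipF g (h i)))\<^sup>2) \<le> (\<Sum>i. (cmod (ipF g (h i)))\<^sup>2)"
      by (rule sum_le_suminf[OF L(1) that]) simp
    also have "\<dots> \<le> max L 0 * (nm g)\<^sup>2"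
      using L(2)[of g] mult_right_mono[of L "max L 0" "(nm g)\<^sup>2"] by simp
    finally show ?thesis .
  qed
  then show ?thesis using that[of "max L 0"] L(1) by simp
qed

lemma partial_frame_op_diff:
  "m \<le> k \<Longrightarrow> partial_frame_op h {..<k} x - partial_frame_op h {..<m} x = partial_frame_op h {m..<k} x"
  unfolding partial_frame_op_def
  by (simp add: lessThan_atLeast0 sum.atLeastLessThan_concat[of 0 m k, symmetric])

lemma bessel_seq_partial_frame_op_hconv:
  assumes "bessel_seq h"
  shows "\<exists>y. hconv ipF (\<lambda>N. partial_frame_op h {..<N} x) y"
proof (rule hconv_Cauchy, intro allI impI)
  let ?P = "\<lambda>N. partial_frame_op h {..<N} x" and ?c = "\<lambda>i. (cmod (ipF x (h i)))\<^sup>2"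
  obtain L where L: "0 \<le> L" "summable ?c"
    "\<And>I g. finite I \<Longrightarrow> (\<Sum>i\<in>I. (cmod (ipF g (h i)))\<^sup>2) \<le> L * (nm g)\<^sup>2"
    using bessel_seqE[OF assms] by metis
  fix e :: real
  assume e: "0 < e"
  then obtain N where N: "\<forall>m\<ge>N. \<forall>n. norm (\<Sum>i\<in>{m..<n}. ?c i) < e\<^sup>2 / (L + 1)"
    using L(1,2) unfolding summable_Cauchy by (metis add_nonneg_pos divide_pos_pos zero_less_one zero_less_power)
  have "nm (?P k - ?P m) < e" if "N \<le> m" "m \<le> k" for k m
  proof -
    have "(nm (?P k - ?P m))\<^sup>2 \<le> L * (\<Sum>i\<in>{m..<k}. ?c i)"
      using partial_frame_op_norm_power2_le[where L = L and I = "{m..<k}"] L(1,3) partial_frame_op_diff[OF that(2)]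
      by simp
    also have "\<dots> \<le> L * (e\<^sup>2 / (L + 1))"
      using N[rule_format, OF that(1), of k] L(1) abs_of_nonneg[OF sum_nonneg[of "{m..<k}" ?c]]
      by (intro mult_left_mono) auto
    also have "\<dots> < e\<^sup>2" using e L(1) by (simp add: field_simps)
    finally show ?thesis using e by (simp add: power_less_imp_less_base)
  qed
  then show "\<exists>N. \<forall>k\<ge>N. \<forall>m\<ge>N. nm (?P k - ?P m) < e"
    by (metis nle_le nm_diff_commute)
qed

end

section \<open>Coercive positive operators\<close>

locale coercive_op = hilbert +
  fixes T :: "'a \<Rightarrow> 'a" and a K :: real
  assumes linear_T: "lin T" and positive_T: "positive_op ipF T" and a_pos: "0 < a"
    and coercive: "\<And>x. a * (nm x)\<^sup>2 \<le> Re (ipF (T x) x)"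
    and bounded: "\<And>x. nm (T x) \<le> K * nm x"
begin

lemma norm_lower: "a * nm x \<le> nm (T x)"
proof (cases "nm x = 0")
  case False
  have "a * nm x * nm x \<le> Re (ipF (T x) x)" using coercive[of x] by (simp add: power2_eq_square)
  also have "\<dots> \<le> nm (T x) * nm x"
    using complex_Re_le_cmod[of "ipF (T x) x"] ip_cauchy_schwarz[of "T x" x] by linarith
  finally show ?thesis using False nm_nonneg[of x] by simp
qed simp

lemma inj_T: "inj T"
proof (rule injI)
  fix x y
  assume "T x = T y"
  then have "a * nm (x - y) \<le> 0" using norm_lower[of "x - y"] by (simp add: VP.linear_diff[OF linear_T])
  then show "x = y" using a_pos nm_nonneg[of "x - y"] nm_eq_0_iff[of "x - y"] by (simp add: mult_le_0_iff)
qed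

abbreviation energy_nm :: "'a \<Rightarrow> real" where "energy_nm \<equiv> hnorm (\<lambda>x y. ipF (T x) y)"

lemma energy_nm_bounds: "sqrt a * nm x \<le> energy_nm x" "energy_nm x \<le> sqrt \<bar>K\<bar> * nm x"
proof -
  have "sqrt (a * (nm x)\<^sup>2) \<le> sqrt (Re (ipF (T x) x))"
    by (rule real_sqrt_le_mono[OF coercive])
  then show "sqrt a * nm x \<le> energy_nm x"
    by (simp add: real_sqrt_mult hnorm_def[of "\<lambda>x y. ipF (T x) y"])
  have "Re (ipF (T x) x) \<le> \<bar>K\<bar> * (nm x)\<^sup>2"
    using ip_Re_le_of_bound[where T = T and K = K, OF bounded[of x]] mult_right_mono[OF abs_ge_self[of K], of "(nm x)\<^sup>2"]
    by simp
  then have "sqrt (Re (ipF (T x) x)) \<le> sqrt (\<bar>K\<bar> * (nm x)\<^sup>2)" by (rule real_sqrt_le_mono)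
  then show "energy_nm x \<le> sqrt \<bar>K\<bar> * nm x"
    by (simp add: real_sqrt_mult hnorm_def[of "\<lambda>x y. ipF (T x) y"])
qed

lemma energy_nm_nonneg: "0 \<le> energy_nm x"
  using positive_T by (simp add: hnorm_def positive_op_def)

lemma energy_Cauchy_imp_Cauchy:
  assumes "\<forall>e>0. \<exists>N. \<forall>k\<ge>N. \<forall>m\<ge>N. energy_nm (s k - s m) < e"
  shows "\<forall>e>0. \<exists>N. \<forall>k\<ge>N. \<forall>m\<ge>N. nm (s k - s m) < e"
proof (intro allI impI)
  fix e :: real
  assume "0 < e"
  then obtain N where N: "\<forall>k\<ge>N. \<forall>m\<ge>N. energy_nm (s k - s m) < sqrt a * e"
    using assms a_pos by (meson mult_pos_pos real_sqrt_gt_0_iff)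
  have "nm (s k - s m) < e" if "N \<le> k" "N \<le> m" for k m
  proof -
    have "energy_nm (s k - s m) < sqrt a * e" using N that by blast
    then have "sqrt a * nm (s k - s m) < sqrt a * e"
      using energy_nm_bounds(1)[of "s k - s m"] by linarith
    then show ?thesis using a_pos by simp
  qed
  then show "\<exists>N. \<forall>k\<ge>N. \<forall>m\<ge>N. nm (s k - s m) < e" by blast
qed

lemma hconv_imp_energy_hconv:
  assumes "hconv ipF s L"
  shows "hconv (\<lambda>x y. ipF (T x) y) s L"
  unfolding hconv_def
proof (rule LIMSEQ_0_by_bound)
  show "(\<lambda>k. sqrt \<bar>K\<bar> * nm (s k - L)) \<longlonglongrightarrow> 0"
    using assms tendsto_mult_right_zero[of "\<lambda>k. nm (s k - L)" sequentially "sqrt \<bar>K\<bar>"]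
    by (simp add: hconv_def)
  show "norm (energy_nm (s k - L)) \<le> sqrt \<bar>K\<bar> * nm (s k - L)" for k
    using energy_nm_bounds(2)[of "s k - L"] energy_nm_nonneg[of "s k - L"] by simp
qed

lemma hilbert_energy: "hilbert sb (\<lambda>x y. ipF (T x) y)"
  unfolding hilbert_def hilbert_space_def
proof (intro conjI allI impI)
  show "vector_space sb" by (rule V.vector_space_axioms)
  have Im: "\<And>x. Im (ipF (T x) x) = 0" using positive_T by (simp add: positive_op_def)
  show "ipF (T x) y = cnj (ipF (T y) x)" for x y by (rule positive_op_conj_sym[OF linear_T Im])
  show "ipF (T (sb c x)) y = c * ipF (T x) y" for c x y by (simp add: VP.linear_scale[OF linear_T])
  show "ipF (T (x + x')) y = ipF (T x) y + ipF (T x') y" for x x' y by (simp add: VP.linear_add[OF linear_T])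
  show "Im (ipF (T x) x) = 0" "0 \<le> Re (ipF (T x) x)" for x using positive_T by (simp_all add: positive_op_def)
next
  fix x
  assume "ipF (T x) x = 0"
  then have "a * (nm x)\<^sup>2 \<le> 0" using coercive[of x] by simp
  then show "x = 0" using a_pos by (simp add: mult_le_0_iff nm_eq_0_iff)
next
  fix s :: "nat \<Rightarrow> 'a"
  assume "\<forall>e>0. \<exists>N. \<forall>k\<ge>N. \<forall>m\<ge>N. energy_nm (s k - s m) < e"
  then obtain L where "hconv ipF s L" using hconv_Cauchy[OF energy_Cauchy_imp_Cauchy] by blast
  then show "\<exists>L. hconv (\<lambda>x y. ipF (T x) y) s L" using hconv_imp_energy_hconv by blast
qed

lemma surj_T: "surj T"
proof -
  interpret E: hilbert sb "\<lambda>x y. ipF (T x) y" by (rule hilbert_energy)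
  have "\<exists>x. y = T x" for y
  proof -
    have "cmod (ipF u y) \<le> (nm y / sqrt a) * energy_nm u" for u
    proof -
      have "nm u \<le> energy_nm u / sqrt a" using energy_nm_bounds(1)[of u] a_pos by (simp add: field_simps)
      then have "cmod (ipF u y) \<le> energy_nm u / sqrt a * nm y"
        using ip_cauchy_schwarz[of u y] by (meson mult_right_mono nm_nonneg order_trans)
      then show ?thesis by (simp add: mult.commute)
    qed
    then obtain k where k: "\<And>u. ipF u y = ipF (T u) k"
      using E.riesz_representation[of "\<lambda>u. ipF u y" "nm y / sqrt a"] a_pos by auto
    have "ipF (y - T k) (y - T k) = 0"
      using k[of "y - T k"] positive_op_selfadjoint[OF linear_T positive_T] by simp
    then show ?thesis using ip_self_eq_0 by (metis eq_iff_diff_eq_0)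
  qed
  then show ?thesis by blast
qed

lemma bij_T: "bij T"
  using inj_T surj_T by (simp add: bij_def)

lemma T_inv [simp]: "T (inv T y) = y"
  by (meson bij_T bij_inv_eq_iff)

lemma inv_T [simp]: "inv T (T x) = x"
  by (rule inv_f_f[OF inj_T])

lemma linear_inv: "lin (inv T)"
  by (rule linearI) (metis inv_T T_inv VP.linear_add[OF linear_T] VP.linear_scale[OF linear_T])+

lemma inv_norm_le: "nm (inv T y) \<le> (1 / a) * nm y"
  using norm_lower[of "inv T y"] a_pos by (simp add: field_simps)

lemma positive_inv: "positive_op ipF (inv T)"
  unfolding positive_op_def
proof
  fix y
  have "ipF (inv T y) y = ipF (T (inv T y)) (inv T y)"
    using positive_op_selfadjoint[OF linear_T positive_T, of "inv T y" "inv T y"] by simp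
  then show "Im (ipF (inv T y) y) = 0 \<and> 0 \<le> Re (ipF (inv T y) y)"
    using positive_T[unfolded positive_op_def, rule_format, of "inv T y"] by simp
qed

end

section \<open>Square roots of positive operators\<close>

text \<open>The iterates of \<open>p \<mapsto> (X + p\<^sup>2) / 2\<close> from \<open>0\<close> converge to \<open>1 - sqrt (1 - X)\<close> on \<open>[0, 1]\<close>.
  Their coefficients are nonnegative and increase with \<open>k\<close>; evaluated at a positive contraction
  they therefore give an increasing sequence of positive operators.\<close>

primrec sqrt_iter_poly :: "nat \<Rightarrow> real poly" where
  "sqrt_iter_poly 0 = 0"
| "sqrt_iter_poly (Suc k) = smult (1/2) ([:0, 1:] + sqrt_iter_poly k * sqrt_iter_poly k)"

definition nonneg_coeffs :: "real poly \<Rightarrow> bool" where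
  "nonneg_coeffs p \<longleftrightarrow> (\<forall>m. 0 \<le> coeff p m)"

lemma nonneg_coeffs_add: "nonneg_coeffs p \<Longrightarrow> nonneg_coeffs q \<Longrightarrow> nonneg_coeffs (p + q)"
  by (simp add: nonneg_coeffs_def)

lemma nonneg_coeffs_mult: "nonneg_coeffs p \<Longrightarrow> nonneg_coeffs q \<Longrightarrow> nonneg_coeffs (p * q)"
  by (auto simp: nonneg_coeffs_def coeff_mult intro!: sum_nonneg)

lemma nonneg_coeffs_smult: "0 \<le> r \<Longrightarrow> nonneg_coeffs p \<Longrightarrow> nonneg_coeffs (smult r p)"
  by (simp add: nonneg_coeffs_def)

lemma nonneg_coeffs_pCons [simp]: "nonneg_coeffs (pCons c p) \<longleftrightarrow> 0 \<le> c \<and> nonneg_coeffs p"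
  by (auto simp: nonneg_coeffs_def coeff_pCons split: nat.split)

lemma nonneg_coeffs_0 [simp]: "nonneg_coeffs 0"
  by (simp add: nonneg_coeffs_def)

lemma sqrt_iter_poly_nonneg:
  "nonneg_coeffs (sqrt_iter_poly k) \<and> nonneg_coeffs (sqrt_iter_poly (Suc k) - sqrt_iter_poly k)"
proof (induct k)
  case 0
  show ?case by (simp add: nonneg_coeffs_smult)
next
  case (Suc k)
  let ?p = sqrt_iter_poly
  have p: "nonneg_coeffs (?p (Suc k))"
    using nonneg_coeffs_add[of "?p k" "?p (Suc k) - ?p k"] Suc by simp
  have "?p (Suc (Suc k)) - ?p (Suc k) = smult (1/2) ((?p (Suc k) + ?p k) * (?p (Suc k) - ?p k))"
    by (simp add: algebra_simps smult_add_right smult_diff_right)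
  moreover have "nonneg_coeffs \<dots>"
    using Suc p by (intro nonneg_coeffs_smult nonneg_coeffs_mult nonneg_coeffs_add) auto
  ultimately show ?case using p by simp
qed

lemma sqrt_iter_poly_mono: "k \<le> m \<Longrightarrow> nonneg_coeffs (sqrt_iter_poly m - sqrt_iter_poly k)"
proof (induct m rule: dec_induct)
  case base
  show ?case by simp
next
  case (step n)
  have "sqrt_iter_poly (Suc n) - sqrt_iter_poly k
      = (sqrt_iter_poly n - sqrt_iter_poly k) + (sqrt_iter_poly (Suc n) - sqrt_iter_poly n)"
    by simp
  then show ?case using step sqrt_iter_poly_nonneg[of n] nonneg_coeffs_add by metis
qed

locale sqrt_construction = hilbert +
  fixes T :: "'a \<Rightarrow> 'a" and K :: real
  assumes linear_T: "lin T" and positive_T: "positive_op ipF T"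
    and bounded_T: "\<And>x. nm (T x) \<le> K * nm x" and K_pos: "0 < K"
begin

lemma T_Re_le: "Re (ipF (T x) x) \<le> K * (nm x)\<^sup>2"
  by (rule ip_Re_le_of_bound[OF bounded_T])

lemma T_Re_nonneg: "0 \<le> Re (ipF (T x) x)"
  using positive_T by (simp add: positive_op_def)

definition Bop :: "'a \<Rightarrow> 'a" where
  "Bop x = x - sb (complex_of_real (1 / K)) (T x)"

lemma linear_Bop: "lin Bop"
  by (rule linearI) (simp_all add: Bop_def VP.linear_add[OF linear_T] VP.linear_scale[OF linear_T]
      V.scale_right_distrib V.scale_right_diff_distrib algebra_simps)

lemma positive_Bop: "positive_op ipF Bop"
  unfolding positive_op_def
proof
  fix x
  have "Re (ipF (T x) x) / K \<le> (nm x)\<^sup>2" using T_Re_le[of x] K_pos by (simp add: field_simps)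
  then show "Im (ipF (Bop x) x) = 0 \<and> 0 \<le> Re (ipF (Bop x) x)"
    using positive_T by (simp add: Bop_def positive_op_def nm_power2)
qed

lemma Bop_selfadjoint: "ipF (Bop x) y = ipF x (Bop y)"
  by (rule positive_op_selfadjoint[OF linear_Bop positive_Bop])

lemma Bop_norm_le: "nm (Bop x) \<le> nm x"
proof -
  let ?R = "Re (ipF (T x) x)"
  have Re: "Re (ipF x (sb (complex_of_real (1 / K)) (T x))) = ?R / K"
    by (subst ip_conj_sym) simp
  have "(nm (T x))\<^sup>2 \<le> K * ?R"
    using positive_op_norm_power2_le[OF linear_T positive_T] K_pos T_Re_le by simp
  then have "(nm (T x) / K)\<^sup>2 \<le> ?R / K"
    using K_pos by (simp add: power_divide field_simps power2_eq_square)
  moreover have "(nm (Bop x))\<^sup>2 = (nm x)\<^sup>2 - 2 * (?R / K) + (nm (T x) / K)\<^sup>2"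
    unfolding Bop_def nm_diff_power2 Re using K_pos by (simp add: power_mult_distrib norm_divide)
  ultimately have "(nm (Bop x))\<^sup>2 \<le> (nm x)\<^sup>2 - ?R / K" by simp
  also have "\<dots> \<le> (nm x)\<^sup>2" using T_Re_nonneg[of x] K_pos by simp
  finally show ?thesis by (rule power2_le_imp_le) simp
qed

lemma Bop_commute: "lin L \<Longrightarrow> (\<And>x. L (T x) = T (L x)) \<Longrightarrow> L (Bop x) = Bop (L x)"
  by (simp add: Bop_def VP.linear_diff VP.linear_scale)

abbreviation Bpow :: "nat \<Rightarrow> 'a \<Rightarrow> 'a" where "Bpow m \<equiv> Bop ^^ m"

lemma Bpow_selfadjoint: "ipF (Bpow m x) y = ipF x (Bpow m y)"
proof (induct m arbitrary: y)
  case (Suc m)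
  have "ipF (Bpow (Suc m) x) y = ipF (Bpow m x) (Bop y)" by (simp add: Bop_selfadjoint)
  also have "\<dots> = ipF x (Bpow m (Bop y))" by (rule Suc)
  finally show ?case by (simp add: funpow_swap1)
qed simp

text \<open>Even powers are squares of self-adjoint operators, odd ones add a positive middle factor.\<close>

lemma positive_Bpow: "positive_op ipF (Bpow m)"
  unfolding positive_op_def
proof
  fix x
  have "\<exists>l. m = 2 * l \<or> m = Suc (2 * l)" by presburger
  then obtain l where "m = 2 * l \<or> m = Suc (2 * l)" by blast
  then show "Im (ipF (Bpow m x) x) = 0 \<and> 0 \<le> Re (ipF (Bpow m x) x)"
  proof
    assume "m = 2 * l"
    then have "ipF (Bpow m x) x = ipF (Bpow l x) (Bpow l x)"
      by (simp add: mult_2 funpow_add Bpow_selfadjoint)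
    then show ?thesis by (simp add: ip_self_Re_nonneg)
  next
    assume "m = Suc (2 * l)"
    then have "ipF (Bpow m x) x = ipF (Bop (Bpow l x)) (Bpow l x)"
      by (simp add: mult_2 funpow_add funpow_swap1 Bpow_selfadjoint)
    then show ?thesis using positive_Bop by (simp add: positive_op_def)
  qed
qed

lemma Bpow_commute: "lin L \<Longrightarrow> (\<And>x. L (T x) = T (L x)) \<Longrightarrow> L (Bpow m x) = Bpow m (L x)"
  by (induct m) (simp_all add: Bop_commute)

definition poly_op :: "real poly \<Rightarrow> 'a \<Rightarrow> 'a" where
  "poly_op p x = (\<Sum>m<Suc (degree p). sb (complex_of_real (coeff p m)) (Bpow m x))"

lemma poly_op_upto:
  "degree p < N \<Longrightarrow> poly_op p x = (\<Sum>m<N. sb (complex_of_real (coeff p m)) (Bpow m x))"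
proof (induct N)
  case (Suc N)
  show ?case
  proof (cases "degree p < N")
    case True
    then show ?thesis using Suc by (simp add: coeff_eq_0)
  next
    case False
    then have "N = degree p" using Suc by simp
    then show ?thesis by (simp add: poly_op_def)
  qed
qed simp

lemma poly_op_pCons: "poly_op (pCons c p) x = sb (complex_of_real c) x + Bop (poly_op p x)"
proof -
  have "degree (pCons c p) < Suc (Suc (degree p))" using degree_pCons_le[of c p] by simp
  then have "poly_op (pCons c p) x
      = (\<Sum>m<Suc (Suc (degree p)). sb (complex_of_real (coeff (pCons c p) m)) (Bpow m x))"
    by (rule poly_op_upto)
  also have "\<dots> = sb (complex_of_real c) x
      + (\<Sum>m<Suc (degree p). sb (complex_of_real (coeff p m)) (Bop (Bpow m x)))"
    by (subst sum.lessThan_Suc_shift) simp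
  also have "(\<Sum>m<Suc (degree p). sb (complex_of_real (coeff p m)) (Bop (Bpow m x))) = Bop (poly_op p x)"
    by (simp only: poly_op_def VP.linear_sum[OF linear_Bop] VP.linear_scale[OF linear_Bop])
  finally show ?thesis .
qed

lemma poly_op_0 [simp]: "poly_op 0 x = 0"
  by (simp add: poly_op_def)

lemma linear_poly_op: "lin (poly_op p)"
proof (induct p)
  case 0
  show ?case by (rule linearI) simp_all
next
  case (pCons c p)
  show ?case
    by (rule linearI) (simp_all add: poly_op_pCons VP.linear_add[OF pCons(2)] VP.linear_scale[OF pCons(2)]
        VP.linear_add[OF linear_Bop] VP.linear_scale[OF linear_Bop] V.scale_right_distrib algebra_simps)
qed

lemma poly_op_add: "poly_op (p + q) x = poly_op p x + poly_op q x"
proof (induct p arbitrary: q)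
  case (pCons c p)
  obtain d r where q: "q = pCons d r" by (rule pCons_cases)
  show ?case
    by (simp add: q poly_op_pCons pCons(2) VP.linear_add[OF linear_Bop] V.scale_left_distrib algebra_simps)
qed simp

lemma poly_op_smult: "poly_op (smult r p) x = sb (complex_of_real r) (poly_op p x)"
  by (induct p) (simp_all add: poly_op_pCons VP.linear_scale[OF linear_Bop] V.scale_right_distrib)

lemma poly_op_mult: "poly_op (p * q) x = poly_op p (poly_op q x)"
proof (induct p)
  case (pCons c p)
  have "poly_op (pCons 0 (p * q)) x = Bop (poly_op (p * q) x)" by (simp add: poly_op_pCons)
  then show ?case by (simp add: poly_op_add poly_op_smult poly_op_pCons pCons(2) del: pCons_0_0)
qed simp

lemma poly_op_X: "poly_op [:0, 1:] x = Bop x"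
  by (simp add: poly_op_pCons VP.linear_0[OF linear_Bop])

lemma poly_op_diff: "poly_op (p - q) x = poly_op p x - poly_op q x"
  using poly_op_add[of q "p - q" x] by (simp add: eq_diff_eq')

lemma positive_poly_op: "nonneg_coeffs p \<Longrightarrow> positive_op ipF (poly_op p)"
  using positive_Bpow
  by (simp add: positive_op_def poly_op_def ip_sum_left nonneg_coeffs_def sum_nonneg)

lemma poly_op_commute:
  assumes "lin L" "\<And>x. L (T x) = T (L x)"
  shows "L (poly_op p x) = poly_op p (L x)"
  by (simp only: poly_op_def VP.linear_sum[OF assms(1)] VP.linear_scale[OF assms(1)] Bpow_commute[OF assms])

abbreviation Y :: "nat \<Rightarrow> 'a \<Rightarrow> 'a" where "Y k \<equiv> poly_op (sqrt_iter_poly k)"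

lemma Y_Suc: "Y (Suc k) x = sb (1/2) (Bop x + Y k (Y k x))"
  by (simp add: poly_op_smult poly_op_add poly_op_mult poly_op_X)

lemma Y_norm_le: "nm (Y k x) \<le> nm x"
proof (induct k arbitrary: x)
  case (Suc k)
  have "nm (Y (Suc k) x) = cmod (1/2 :: complex) * nm (Bop x + Y k (Y k x))"
    by (simp only: Y_Suc nm_scale)
  also have "\<dots> = 1/2 * nm (Bop x + Y k (Y k x))" by simp
  also have "\<dots> \<le> 1/2 * (nm (Bop x) + nm (Y k (Y k x)))" using nm_triangle by simp
  also have "\<dots> \<le> 1/2 * (nm x + nm x)" using Bop_norm_le[of x] Suc[of "Y k x"] Suc[of x] by simp
  finally show ?case by simp
qed simp

lemma positive_Y: "positive_op ipF (Y k)"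
  using sqrt_iter_poly_nonneg[of k] by (simp add: positive_poly_op)

lemma Y_Re_bounds: "0 \<le> Re (ipF (Y k x) x)" "Re (ipF (Y k x) x) \<le> (nm x)\<^sup>2"
  using positive_Y ip_Re_le_of_bound[where T = "Y k" and K = 1 and x = x] Y_norm_le[of k x]
  by (simp_all add: positive_op_def)

lemma Y_diff_norm_power2_le:
  assumes "k \<le> m"
  shows "(nm (Y m x - Y k x))\<^sup>2 \<le> Re (ipF (Y m x) x) - Re (ipF (Y k x) x)"
proof -
  have "(\<lambda>x. Y m x - Y k x) = poly_op (sqrt_iter_poly m - sqrt_iter_poly k)"
    by (simp add: fun_eq_iff poly_op_diff)
  then have "positive_op ipF (\<lambda>x. Y m x - Y k x)"
    using positive_poly_op[OF sqrt_iter_poly_mono[OF assms]] by simp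
  moreover have "lin (\<lambda>x. Y m x - Y k x)" by (intro VP.linear_compose_sub linear_poly_op)
  moreover have "Re (ipF (Y m z - Y k z) z) \<le> 1 * (nm z)\<^sup>2" for z
    using Y_Re_bounds[of m z] Y_Re_bounds[of k z] by simp
  ultimately show ?thesis using positive_op_norm_power2_le[of "\<lambda>x. Y m x - Y k x" 1 x] by simp
qed

lemma Y_Cauchy: "\<forall>e>0. \<exists>N. \<forall>k\<ge>N. \<forall>m\<ge>N. nm (Y k x - Y m x) < e"
proof (intro allI impI)
  fix e :: real
  assume e: "0 < e"
  let ?r = "\<lambda>k. Re (ipF (Y k x) x)"
  have "incseq ?r"
  proof (rule incseq_SucI)
    fix n
    show "?r n \<le> ?r (Suc n)"
      using Y_diff_norm_power2_le[of n "Suc n" x] zero_le_power2[of "nm (Y (Suc n) x - Y n x)"] by linarith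
  qed
  moreover have "Bseq ?r" by (rule BseqI'[of _ "(nm x)\<^sup>2"]) (use Y_Re_bounds in auto)
  ultimately have "Cauchy ?r" by (intro convergent_Cauchy Bseq_mono_convergent) (auto simp: incseq_def)
  then obtain N where N: "\<forall>m\<ge>N. \<forall>n\<ge>N. dist (?r m) (?r n) < e\<^sup>2"
    using e unfolding Cauchy_def by (meson zero_less_power)
  have "(nm (Y k x - Y m x))\<^sup>2 < e\<^sup>2" if "N \<le> k" "N \<le> m" "m \<le> k" for k m
    using Y_diff_norm_power2_le[OF that(3), of x] N that(1,2) by (fastforce simp: dist_real_def)
  then have "nm (Y k x - Y m x) < e" if "N \<le> k" "N \<le> m" for k m
    using that e nm_diff_commute[of "Y k x"] by (metis nle_le power_less_imp_less_base less_imp_le)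
  then show "\<exists>N. \<forall>k\<ge>N. \<forall>m\<ge>N. nm (Y k x - Y m x) < e" by blast
qed

definition Y_lim :: "'a \<Rightarrow> 'a" where
  "Y_lim x = (SOME L. hconv ipF (\<lambda>k. Y k x) L)"

lemma Y_lim: "hconv ipF (\<lambda>k. Y k x) (Y_lim x)"
  unfolding Y_lim_def by (rule someI_ex) (rule hconv_Cauchy[OF Y_Cauchy])

lemma linear_Y_lim: "lin Y_lim"
  by (rule linear_hconv_limit[OF linear_poly_op Y_lim])

lemma Y_lim_norm_le: "nm (Y_lim x) \<le> nm x"
  by (rule LIMSEQ_le_const2[OF hconv_nm[OF Y_lim]]) (use Y_norm_le in blast)

lemma positive_Y_lim: "positive_op ipF Y_lim"
  unfolding positive_op_def
proof
  fix x
  have lim: "(\<lambda>k. ipF (Y k x) x) \<longlonglongrightarrow> ipF (Y_lim x) x" by (rule hconv_ip_left[OF Y_lim])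
  have "(\<lambda>k. Im (ipF (Y k x) x)) \<longlonglongrightarrow> Im (ipF (Y_lim x) x)" by (rule tendsto_Im[OF lim])
  moreover have "(\<lambda>k. Im (ipF (Y k x) x)) = (\<lambda>k. 0)" using positive_Y by (simp add: positive_op_def)
  ultimately have "Im (ipF (Y_lim x) x) = 0" using LIMSEQ_unique tendsto_const by metis
  moreover have "0 \<le> Re (ipF (Y_lim x) x)"
    by (rule LIMSEQ_le_const[OF tendsto_Re[OF lim]]) (use Y_Re_bounds in blast)
  ultimately show "Im (ipF (Y_lim x) x) = 0 \<and> 0 \<le> Re (ipF (Y_lim x) x)" by simp
qed

lemma Y_lim_commute:
  assumes "lin L" "\<And>x. nm (L x) \<le> KL * nm x" "\<And>x. L (T x) = T (L x)"
  shows "L (Y_lim x) = Y_lim (L x)"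
proof -
  have "hconv ipF (\<lambda>k. L (Y k x)) (L (Y_lim x))" by (rule hconv_linear[OF assms(1,2) Y_lim])
  then show ?thesis using Y_lim hconv_unique by (simp add: poly_op_commute[OF assms(1,3)])
qed

lemma Y_lim_fixpoint: "Y_lim x = sb (1/2) (Bop x + Y_lim (Y_lim x))"
proof -
  have "hconv ipF (\<lambda>k. Y k (Y k x)) (Y_lim (Y_lim x))"
    unfolding hconv_def
  proof (rule LIMSEQ_0_by_bound)
    show "(\<lambda>k. nm (Y k x - Y_lim x) + nm (Y k (Y_lim x) - Y_lim (Y_lim x))) \<longlonglongrightarrow> 0"
      using tendsto_add[OF Y_lim[of x, unfolded hconv_def] Y_lim[of "Y_lim x", unfolded hconv_def]] by simp
    fix k
    have "Y k (Y k x) - Y_lim (Y_lim x) = Y k (Y k x - Y_lim x) + (Y k (Y_lim x) - Y_lim (Y_lim x))"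
      by (simp add: VP.linear_diff[OF linear_poly_op])
    then have "nm (Y k (Y k x) - Y_lim (Y_lim x))
        \<le> nm (Y k (Y k x - Y_lim x)) + nm (Y k (Y_lim x) - Y_lim (Y_lim x))"
      using nm_triangle by metis
    then show "norm (nm (Y k (Y k x) - Y_lim (Y_lim x)))
        \<le> nm (Y k x - Y_lim x) + nm (Y k (Y_lim x) - Y_lim (Y_lim x))"
      using Y_norm_le[of k "Y k x - Y_lim x"] by simp
  qed
  then have "hconv ipF (\<lambda>k. Y (Suc k) x) (sb (1/2) (Bop x + Y_lim (Y_lim x)))"
    unfolding Y_Suc by (intro hconv_scale hconv_add) (simp_all add: hconv_def)
  moreover have "hconv ipF (\<lambda>k. Y (Suc k) x) (Y_lim x)"
    using Y_lim unfolding hconv_def by (rule LIMSEQ_Suc)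
  ultimately show ?thesis using hconv_unique by metis
qed

definition root :: "'a \<Rightarrow> 'a" where
  "root x = sb (complex_of_real (sqrt K)) (x - Y_lim x)"

lemma linear_root: "lin root"
  unfolding root_def[abs_def]
  by (intro VP.linear_compose_scale_right VP.linear_compose_sub V.linear_ident linear_Y_lim)

lemma root_root: "root (root x) = T x"
proof -
  let ?c = "complex_of_real (sqrt K)"
  have "sb 2 (Y_lim x) = Bop x + Y_lim (Y_lim x)" by (subst Y_lim_fixpoint) simp
  then have "x - Y_lim x - Y_lim (x - Y_lim x) = x - Bop x"
    by (simp add: VP.linear_diff[OF linear_Y_lim] two_scale algebra_simps)
  also have "\<dots> = sb (complex_of_real (1 / K)) (T x)" by (simp add: Bop_def)
  finally have fixpoint: "x - Y_lim x - Y_lim (x - Y_lim x) = sb (complex_of_real (1 / K)) (T x)" .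
  have "root (root x) = sb ?c (sb ?c (x - Y_lim x - Y_lim (x - Y_lim x)))"
    unfolding root_def VP.linear_scale[OF linear_Y_lim] by (simp only: V.scale_right_diff_distrib)
  also have "\<dots> = sb (?c * ?c * complex_of_real (1 / K)) (T x)" by (simp add: fixpoint mult.assoc)
  also have "?c * ?c * complex_of_real (1 / K) = 1" using K_pos by (simp flip: of_real_mult)
  finally show ?thesis by simp
qed

lemma positive_root: "positive_op ipF root"
  unfolding positive_op_def
proof
  fix x
  have "Re (ipF (Y_lim x) x) \<le> Re (ipF x x)"
    using ip_Re_le_of_bound[where T = Y_lim and K = 1 and x = x] Y_lim_norm_le[of x] by (simp add: nm_power2)
  moreover have "Im (ipF (Y_lim x) x) = 0" using positive_Y_lim by (simp add: positive_op_def)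
  ultimately show "Im (ipF (root x) x) = 0 \<and> 0 \<le> Re (ipF (root x) x)"
    using K_pos by (simp add: root_def)
qed

lemma root_norm_le: "nm (root x) \<le> (2 * sqrt K) * nm x"
proof -
  have "nm (x - Y_lim x) \<le> 2 * nm x" using nm_diff_le[of x "Y_lim x"] Y_lim_norm_le[of x] by simp
  then show ?thesis using K_pos by (simp add: root_def mult_left_mono)
qed

lemma root_commute:
  assumes "lin L" "\<And>x. nm (L x) \<le> KL * nm x" "\<And>x. L (T x) = T (L x)"
  shows "L (root x) = root (L x)"
  using Y_lim_commute[OF assms]
  by (simp add: root_def VP.linear_scale[OF assms(1)] VP.linear_diff[OF assms(1)])

text \<open>For another positive root \<open>R\<close> (which commutes with \<open>T\<close> and hence with \<open>root\<close>), the vector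
  \<open>y = root x - R x\<close> satisfies \<open>root y + R y = T x - T x = 0\<close>; positivity forces \<open>root y = R y = 0\<close>,
  so \<open>\<langle>y, y\<rangle> = \<langle>x, root y\<rangle> - \<langle>x, R y\<rangle> = 0\<close>.\<close>

lemma root_unique:
  assumes "bounded_op sb ipF R" "positive_op ipF R" "R \<circ> R = T"
  shows "R = root"
proof
  fix x
  have linR: "lin R" using assms(1) by (simp add: bounded_op_def)
  obtain KR where KR: "\<And>x. nm (R x) \<le> KR * nm x" using assms(1) by (auto simp: bounded_op_def)
  have RR: "R (R z) = T z" for z using fun_cong[OF assms(3), of z] by simp
  have comm: "R (root z) = root (R z)" for z
    by (rule root_commute[OF linR KR]) (metis RR)
  define y where "y = root x - R x"
  have "root y + R y = 0"
    by (simp add: y_def VP.linear_diff[OF linear_root] VP.linear_diff[OF linR] root_root RR comm)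
  then have "ipF (root y) y + ipF (R y) y = 0" by (metis ip_add_left ip_zero_left)
  then have "Re (ipF (root y) y) + Re (ipF (R y) y) = 0" by (metis plus_complex.sel(1) zero_complex.sel(1))
  moreover have "0 \<le> Re (ipF (root y) y)" "0 \<le> Re (ipF (R y) y)"
    using positive_root assms(2) by (simp_all add: positive_op_def)
  ultimately have "root y = 0" "R y = 0"
    using positive_op_Re_eq_0[OF linear_root positive_root, of y] positive_op_Re_eq_0[OF linR assms(2), of y]
    by linarith+
  have "ipF y y = ipF (root x) y - ipF (R x) y" by (simp only: y_def ip_diff_left)
  also have "\<dots> = ipF x (root y) - ipF x (R y)"
    by (simp only: positive_op_selfadjoint[OF linear_root positive_root]
        positive_op_selfadjoint[OF linR assms(2)])
  also have "\<dots> = 0" using \<open>root y = 0\<close> \<open>R y = 0\<close> by simp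
  finally show "R x = root x" using ip_self_eq_0[of y] by (simp add: y_def)
qed

lemma pos_sqrt_eq_root: "pos_sqrt sb ipF T = root"
  unfolding pos_sqrt_def
proof (rule the_equality)
  show "bounded_op sb ipF root \<and> positive_op ipF root \<and> root \<circ> root = T"
    using linear_root root_norm_le positive_root root_root by (auto simp: bounded_op_def)
qed (use root_unique in blast)

end

context hilbert
begin

lemma sqrt_construction_of_bounded_positive:
  assumes "bounded_op sb ipF T" "positive_op ipF T"
  obtains K where "sqrt_construction sb ipF T K"
proof -
  obtain K where K: "\<And>x. nm (T x) \<le> K * nm x" using assms(1) by (auto simp: bounded_op_def)
  have "nm (T x) \<le> max K 1 * nm x" for x
    using K[of x] mult_right_mono[of K "max K 1" "nm x"] by simp
  then have "sqrt_construction sb ipF T (max K 1)"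
    using assms by (intro sqrt_construction.intro sqrt_construction_axioms.intro hilbert_axioms)
      (simp_all add: bounded_op_def)
  then show ?thesis by (rule that)
qed

lemma pos_sqrt_bounded_positive:
  assumes "bounded_op sb ipF T" "positive_op ipF T"
  shows "bounded_op sb ipF (pos_sqrt sb ipF T)" "positive_op ipF (pos_sqrt sb ipF T)"
    "pos_sqrt sb ipF T \<circ> pos_sqrt sb ipF T = T"
proof -
  obtain K where "sqrt_construction sb ipF T K"
    using sqrt_construction_of_bounded_positive[OF assms] by blast
  then interpret sqrt_construction sb ipF T K .
  show "bounded_op sb ipF (pos_sqrt sb ipF T)" "positive_op ipF (pos_sqrt sb ipF T)"
    "pos_sqrt sb ipF T \<circ> pos_sqrt sb ipF T = T"
    using linear_root root_norm_le positive_root root_root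
    by (auto simp: pos_sqrt_eq_root bounded_op_def fun_eq_iff)
qed

lemma pos_sqrt_commute:
  assumes "bounded_op sb ipF T" "positive_op ipF T" "bounded_op sb ipF L" "L \<circ> T = T \<circ> L"
  shows "L \<circ> pos_sqrt sb ipF T = pos_sqrt sb ipF T \<circ> L"
proof -
  obtain K where "sqrt_construction sb ipF T K"
    using sqrt_construction_of_bounded_positive[OF assms(1,2)] by blast
  then interpret sqrt_construction sb ipF T K .
  obtain KL where "\<And>x. nm (L x) \<le> KL * nm x" using assms(3) by (auto simp: bounded_op_def)
  then show ?thesis
    using root_commute[of L KL] assms(3,4) by (auto simp: pos_sqrt_eq_root bounded_op_def fun_eq_iff)
qed

end

section \<open>Controlled frames\<close>

context hilbert
begin

lemma polarization:
  fixes \<beta> :: "'a \<Rightarrow> 'a \<Rightarrow> complex"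
  assumes add_left: "\<And>x y z. \<beta> (x + y) z = \<beta> x z + \<beta> y z"
    and scale_left: "\<And>a x z. \<beta> (sb a x) z = a * \<beta> x z"
    and add_right: "\<And>x y z. \<beta> x (y + z) = \<beta> x y + \<beta> x z"
    and scale_right: "\<And>a x y. \<beta> x (sb a y) = cnj a * \<beta> x y"
  shows "\<beta> g k = (\<beta> (g + k) (g + k) - \<beta> (g - k) (g - k)
    + \<i> * \<beta> (g + sb \<i> k) (g + sb \<i> k) - \<i> * \<beta> (g - sb \<i> k) (g - sb \<i> k)) / 4"
proof -
  have neg_left: "\<beta> (- x) z = - \<beta> x z" and neg_right: "\<beta> x (- z) = - \<beta> x z" for x z
    using scale_left[of "-1" x z] scale_right[of x "-1" z] by (simp_all add: V.scale_minus_left)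
  have diff_left: "\<beta> (x - y) z = \<beta> x z - \<beta> y z" and diff_right: "\<beta> x (y - z) = \<beta> x y - \<beta> x z"
    for x y z
    using add_left[of x "- y" z] add_right[of x y "- z"] neg_left neg_right by simp_all
  show ?thesis
    by (simp add: add_left scale_left add_right scale_right diff_left diff_right algebra_simps)
qed

end

locale controlled_frame = hilbert +
  fixes C :: "'a \<Rightarrow> 'a" and h :: "nat \<Rightarrow> 'a" and A B :: real
  assumes C_GB: "C \<in> GB sb ipF" and A_pos: "0 < A" and A_le_B: "A \<le> B"
    and frame_bounds: "ctrl_frame_bounds ipF C h A B"
begin

lemma B_pos: "0 < B"
  using A_pos A_le_B by simp

lemma bounded_C: "bounded_op sb ipF C" and linear_C: "lin C" and inj_C: "inj C"
  using C_GB by (auto simp: GB_def bounded_op_def bij_is_inj)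

definition frame_form :: "'a \<Rightarrow> complex" where
  "frame_form g = (\<Sum>i. ipF g (h i) * ipF (C (h i)) g)"

lemma frame_form:
  "(\<lambda>i. ipF g (h i) * ipF (C (h i)) g) sums frame_form g" "Im (frame_form g) = 0"
  "A * (nm g)\<^sup>2 \<le> Re (frame_form g)" "Re (frame_form g) \<le> B * (nm g)\<^sup>2"
proof -
  obtain s where s: "(\<lambda>i. ipF g (h i) * ipF (C (h i)) g) sums s" "Im s = 0"
    "A * (nm g)\<^sup>2 \<le> Re s" "Re s \<le> B * (nm g)\<^sup>2"
    using frame_bounds by (auto simp: ctrl_frame_bounds_def)
  moreover have "s = frame_form g" using s(1) by (simp add: frame_form_def sums_unique)
  ultimately show "(\<lambda>i. ipF g (h i) * ipF (C (h i)) g) sums frame_form g" "Im (frame_form g) = 0"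
    "A * (nm g)\<^sup>2 \<le> Re (frame_form g)" "Re (frame_form g) \<le> B * (nm g)\<^sup>2"
    by simp_all
qed

lemma frame_form_Re_nonneg: "0 \<le> Re (frame_form g)"
  using frame_form(3)[of g] A_pos by (meson order_trans mult_nonneg_nonneg less_imp_le zero_le_power2)

lemma frame_form_cmod_le: "cmod (frame_form g) \<le> B * (nm g)\<^sup>2"
  using frame_form_Re_nonneg[of g] frame_form(2,4)[of g] by (simp add: cmod_eq_Re)

lemma frame_sesq_tendsto:
  "\<exists>l. (\<lambda>N. \<Sum>i<N. ipF g (h i) * ipF (C (h i)) k) \<longlonglongrightarrow> l \<and> cmod l \<le> B * (nm g + nm k)\<^sup>2"
proof -
  let ?\<beta> = "\<lambda>N g k. \<Sum>i<N. ipF g (h i) * ipF (C (h i)) k"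
  let ?l = "(frame_form (g + k) - frame_form (g - k)
    + \<i> * frame_form (g + sb \<i> k) - \<i> * frame_form (g - sb \<i> k)) / 4"
  have polar: "?\<beta> N g k = (?\<beta> N (g + k) (g + k) - ?\<beta> N (g - k) (g - k)
      + \<i> * ?\<beta> N (g + sb \<i> k) (g + sb \<i> k) - \<i> * ?\<beta> N (g - sb \<i> k) (g - sb \<i> k)) / 4" for N
    by (rule polarization) (simp_all add: sum.distrib sum_distrib_left algebra_simps)
  have lim: "(\<lambda>N. ?\<beta> N z z) \<longlonglongrightarrow> frame_form z" for z
    using frame_form(1)[of z] by (simp add: sums_def)
  have "(\<lambda>N. ?\<beta> N g k) \<longlonglongrightarrow> ?l"
    unfolding polar by (intro tendsto_intros lim) simp
  moreover have "cmod ?l \<le> B * (nm g + nm k)\<^sup>2"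
  proof -
    let ?b = "B * (nm g + nm k)\<^sup>2"
    have bound: "cmod (frame_form z) \<le> ?b" if "nm z \<le> nm g + nm k" for z
    proof -
      have "cmod (frame_form z) \<le> B * (nm z)\<^sup>2" by (rule frame_form_cmod_le)
      also have "\<dots> \<le> ?b" using that B_pos by (intro mult_left_mono power_mono) auto
      finally show ?thesis .
    qed
    have "cmod (frame_form (g + k)) \<le> ?b" "cmod (frame_form (g - k)) \<le> ?b"
      "cmod (frame_form (g + sb \<i> k)) \<le> ?b" "cmod (frame_form (g - sb \<i> k)) \<le> ?b"
      using nm_triangle[of g k] nm_diff_le[of g k] nm_triangle[of g "sb \<i> k"] nm_diff_le[of g "sb \<i> k"]
      by (simp_all add: bound)
    moreover have "cmod (frame_form (g + k) - frame_form (g - k) + \<i> * frame_form (g + sb \<i> k)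
        - \<i> * frame_form (g - sb \<i> k)) \<le> cmod (frame_form (g + k)) + cmod (frame_form (g - k))
        + cmod (frame_form (g + sb \<i> k)) + cmod (frame_form (g - sb \<i> k))"
      by (rule order_trans[OF norm_triangle_ineq4], rule add_mono, rule order_trans[OF norm_triangle_ineq],
          rule add_mono, rule norm_triangle_ineq4) (simp_all add: norm_mult)
    ultimately show ?thesis by (simp add: norm_divide)
  qed
  ultimately show ?thesis by blast
qed

text \<open>With \<open>k\<close> the Riesz representative of \<open>u \<mapsto> \<langle>C\<^sup>-\<^sup>1 u, g\<rangle>\<close>, the sesquilinear form at \<open>(g, k)\<close>
  is the Bessel sum of \<open>g\<close>.\<close>

lemma bessel_seq_h: "bessel_seq h"
proof -
  obtain K0 where K0: "\<And>x. nm (inv C x) \<le> K0 * nm x" using C_GB by (auto simp: GB_def bounded_op_def)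
  define KI where "KI = max K0 0"
  have KI: "nm (inv C x) \<le> KI * nm x" for x
    using K0[of x] mult_right_mono[of K0 KI "nm x"] by (simp add: KI_def)
  have lin_invC: "lin (inv C)" using C_GB by (simp add: GB_def bounded_op_def)
  have "summable (\<lambda>i. (cmod (ipF g (h i)))\<^sup>2) \<and> (\<Sum>i. (cmod (ipF g (h i)))\<^sup>2) \<le> B * (1 + KI)\<^sup>2 * (nm g)\<^sup>2"
    for g
  proof -
    have "cmod (ipF (inv C u) g) \<le> (KI * nm g) * nm u" for u
    proof -
      have "cmod (ipF (inv C u) g) \<le> nm (inv C u) * nm g" by (rule ip_cauchy_schwarz)
      also have "\<dots> \<le> KI * nm u * nm g" by (rule mult_right_mono[OF KI nm_nonneg])
      finally show ?thesis by (simp add: ac_simps)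
    qed
    then obtain k where k: "\<And>u. ipF (inv C u) g = ipF u k" and nk: "nm k \<le> KI * nm g"
      using riesz_representation[of "\<lambda>u. ipF (inv C u) g" "KI * nm g"]
      by (auto simp: KI_def VP.linear_add[OF lin_invC] VP.linear_scale[OF lin_invC])
    have "ipF g (h i) * ipF (C (h i)) k = complex_of_real ((cmod (ipF g (h i)))\<^sup>2)" for i
      using k[of "C (h i)"] inv_f_f[OF inj_C] ip_mult_swap[of g "h i"] by simp
    then obtain l where l: "(\<lambda>N. \<Sum>i<N. complex_of_real ((cmod (ipF g (h i)))\<^sup>2)) \<longlonglongrightarrow> l"
      and l_le: "cmod l \<le> B * (nm g + nm k)\<^sup>2"
      using frame_sesq_tendsto[of g k] by auto
    have "(\<lambda>i. (cmod (ipF g (h i)))\<^sup>2) sums Re l"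
      using tendsto_Re[OF l] by (simp add: sums_def)
    moreover have "Re l \<le> B * (1 + KI)\<^sup>2 * (nm g)\<^sup>2"
    proof -
      have "Re l \<le> B * (nm g + nm k)\<^sup>2" using complex_Re_le_cmod[of l] l_le by linarith
      also have "\<dots> \<le> B * ((1 + KI) * nm g)\<^sup>2"
        using nk B_pos by (intro mult_left_mono power_mono) (simp_all add: algebra_simps)
      finally show ?thesis by (simp add: power_mult_distrib)
    qed
    ultimately show ?thesis by (simp add: sums_iff)
  qed
  then show ?thesis unfolding bessel_seq_def by blast
qed

abbreviation S :: "'a \<Rightarrow> 'a" where "S \<equiv> ctrl_frame_op sb ipF C h"

lemma frame_op_partial_sum: "(\<Sum>i<N. sb (ipF x (h i)) (C (h i))) = C (partial_frame_op h {..<N} x)"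
  by (simp add: partial_frame_op_def VP.linear_sum[OF linear_C] VP.linear_scale[OF linear_C])

lemma frame_op_hconv: "hconv ipF (\<lambda>N. C (partial_frame_op h {..<N} x)) (S x)"
proof -
  obtain y where y: "hconv ipF (\<lambda>N. partial_frame_op h {..<N} x) y"
    using bessel_seq_partial_frame_op_hconv[OF bessel_seq_h] by blast
  obtain KC where "\<And>x. nm (C x) \<le> KC * nm x" using bounded_C by (auto simp: bounded_op_def)
  then have "hconv ipF (\<lambda>N. C (partial_frame_op h {..<N} x)) (C y)"
    by (rule hconv_linear[OF linear_C _ y])
  moreover from this have "S x = C y"
    by (simp add: ctrl_frame_op_def frame_op_partial_sum hconv_the)
  ultimately show ?thesis by simp
qed

lemma linear_frame_op: "lin S"
  using linear_hconv_limit[OF _ frame_op_hconv]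
    Vector_Spaces.linear_compose[OF linear_partial_frame_op linear_C]
  by (simp add: comp_def)

lemma frame_op_ip: "ipF (S x) x = frame_form x"
proof -
  have "(\<lambda>N. ipF (C (partial_frame_op h {..<N} x)) x) \<longlonglongrightarrow> ipF (S x) x"
    by (rule hconv_ip_left[OF frame_op_hconv])
  moreover have "ipF (C (partial_frame_op h {..<N} x)) x = (\<Sum>i<N. ipF x (h i) * ipF (C (h i)) x)" for N
    by (simp add: frame_op_partial_sum[symmetric] ip_sum_left)
  ultimately show ?thesis
    using frame_form(1)[of x] LIMSEQ_unique by (simp add: sums_def)
qed

lemma positive_frame_op: "positive_op ipF S"
  using frame_form(2) frame_form_Re_nonneg by (simp add: positive_op_def frame_op_ip)

lemma frame_op_norm_le: "nm (S x) \<le> B * nm x"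
  by (rule positive_op_norm_le[OF linear_frame_op positive_frame_op])
    (use frame_form(4) B_pos in \<open>simp_all add: frame_op_ip\<close>)

sublocale S: coercive_op sb ipF S A B
  by (rule coercive_op.intro[OF hilbert_axioms], rule coercive_op_axioms.intro)
    (simp_all add: linear_frame_op positive_frame_op A_pos frame_op_ip frame_form(3)
      frame_op_norm_le)

lemma parseval_of_inv_commute:
  assumes "inv S \<circ> C = C \<circ> inv S"
  shows "ctrl_parseval_frame ipF C (pos_sqrt sb ipF (inv S) \<circ> h)"
proof -
  define R where "R = pos_sqrt sb ipF (inv S)"
  have bounded_inv: "bounded_op sb ipF (inv S)"
    using S.linear_inv S.inv_norm_le unfolding bounded_op_def by blast
  have R: "bounded_op sb ipF R" "positive_op ipF R" "R \<circ> R = inv S"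
    unfolding R_def by (rule pos_sqrt_bounded_positive[OF bounded_inv S.positive_inv])+
  have linR: "lin R" using R(1) by (simp add: bounded_op_def)
  have RC: "C (R x) = R (C x)" for x
    using pos_sqrt_commute[OF bounded_inv S.positive_inv bounded_C] assms
    by (simp add: R_def fun_eq_iff)
  have bounded_S: "bounded_op sb ipF S"
    using linear_frame_op frame_op_norm_le unfolding bounded_op_def by blast
  have "S \<circ> R = R \<circ> S"
    unfolding R_def by (rule pos_sqrt_commute[OF bounded_inv S.positive_inv bounded_S]) (simp add: fun_eq_iff)
  then have RS: "S (R x) = R (S x)" for x by (metis comp_apply)
  have RSR: "R (S (R g)) = g" for g
    using RS[of "R g"] fun_cong[OF R(3), of g] by simp
  show ?thesis
    unfolding ctrl_parseval_frame_def ctrl_frame_bounds_def R_def[symmetric]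
  proof
    fix g
    have "ipF g (R (h i)) * ipF (C (R (h i))) g = ipF (R g) (h i) * ipF (C (h i)) (R g)" for i
      by (simp add: RC positive_op_selfadjoint[OF linR R(2)])
    then have "(\<lambda>i. ipF g ((R \<circ> h) i) * ipF (C ((R \<circ> h) i)) g) sums frame_form (R g)"
      using frame_form(1)[of "R g"] by simp
    moreover have "frame_form (R g) = ipF g g"
      using frame_op_ip[of "R g"] positive_op_selfadjoint[OF linR R(2), of "S (R g)" g] RSR[of g] by simp
    ultimately show "\<exists>s. (\<lambda>i. ipF g ((R \<circ> h) i) * ipF (C ((R \<circ> h) i)) g) sums s \<and> Im s = 0 \<and>
        1 * (hnorm ipF g)\<^sup>2 \<le> Re s \<and> Re s \<le> 1 * (hnorm ipF g)\<^sup>2"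
      by (intro exI[of _ "ipF g g"]) (simp add: nm_power2)
  qed
qed

end

theorem theorem3p7:
  fixes sa :: "complex \<Rightarrow> 'a::ab_group_add \<Rightarrow> 'a"
    and n :: nat
    and ip :: "'a \<Rightarrow> 'a \<Rightarrow> 'a list \<Rightarrow> complex"
    and as :: "'a list"
    and sb :: "complex \<Rightarrow> 'b::ab_group_add \<Rightarrow> 'b"
    and ipF :: "'b \<Rightarrow> 'b \<Rightarrow> complex"
    and j :: "'a \<Rightarrow> 'b"
    and C :: "'b \<Rightarrow> 'b"
    and f :: "nat \<Rightarrow> 'a"
  assumes "n \<ge> 2"
    and "n_hilbert_space sa n ip"
    and "length as = n - 1"
    and "HF_completion sa ip as sb ipF j"
    and "C \<in> GB sb ipF"
    and "ctrl_frame ipF C (j \<circ> f)"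
    and "inv (ctrl_frame_op sb ipF C (j \<circ> f)) \<circ> C = C \<circ> inv (ctrl_frame_op sb ipF C (j \<circ> f))"
  shows "ctrl_parseval_frame ipF C
           (pos_sqrt sb ipF (inv (ctrl_frame_op sb ipF C (j \<circ> f))) \<circ> j \<circ> f)"
proof -
  have "hilbert_space sb ipF" using assms(4) by (simp add: HF_completion_def)
  moreover obtain A B where "0 < A" "A \<le> B" "ctrl_frame_bounds ipF C (j \<circ> f) A B"
    using assms(6) by (auto simp: ctrl_frame_def)
  ultimately interpret controlled_frame sb ipF C "j \<circ> f" A B
    using assms(5) by unfold_locales
  show ?thesis
    using parseval_of_inv_commute[OF assms(7)] by (simp add: comp_assoc)
qed

end
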